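(* Let $n\ge3$, $\mathfrak{g}=sl_{2n}(\mathbb{C})$, and let $\hat{\mathfrak{g}}$, $\hat e_i,\hat f_i$ and $\hat{\mathfrak{g}}_{fp}$ be as in the context. There is an associative algebra homomorphism $\phi:\mathcal{U}(\mathrm{gim}(M_n))\to\mathcal{U}(\hat{\mathfrak{g}}_{fp})$ with $\phi(e_i)=\hat e_i$ and $\phi(f_i)=\hat f_i$ for $1\le i\le n$; moreover it induces a Lie algebra homomorphism $\phi:\mathrm{gim}(M_n)\to\hat{\mathfrak{g}}_{fp}$ with $e_i\mapsto\hat e_i$, $f_i\mapsto\hat f_i$.
   Context: $\mathcal U$ denotes universal enveloping algebra. For $n\geq 3$, $M_n=(m_{i,j})$ is the $n\times n$ integer matrix with $m_{i,i}=2$, $m_{i,i+1}=m_{i+1,i}=-1$ ($1\le i\le n-1$), $m_{1,n}=m_{n,1}=1$, all other entries $0$. $\mathrm{gim}(M_n)$ is the complex Lie algebra generated by $e_i,f_i,h_i$ ($1\le i\le n$) with relations: (R1) $[h_i,e_j]=m_{i,j}e_j$, $[h_i,f_j]=-m_{i,j}f_j$, $[e_i,f_i]=h_i$ for all $i,j$; (R2) for $i\ne j$ with $m_{i,j}\le0$: $[e_i,f_j]=0=[f_i,e_j]$, $(\mathrm{ad}\,e_i)^{1-m_{i,j}}e_j=0=(\mathrm{ad}\,f_i)^{1-m_{i,j}}f_j$; (R3) for $i\ne j$ with $m_{i,j}>0$: $[e_i,e_j]=0=[f_i,f_j]$, $(\mathrm{ad}\,e_i)^{m_{i,j}+1}f_j=0=(\mathrm{ad}\,f_i)^{m_{i,j}+1}e_j$.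 The affine Lie algebra $\hat{\mathfrak{g}}=\mathfrak{g}\otimes\mathbb{C}[t,t^{-1}]\oplus\mathbb{C}c$ has bracket $[c,\hat{\mathfrak g}]=0$, $[x\otimes t^m,y\otimes t^k]=[x,y]\otimes t^{m+k}+m\delta_{m,-k}(x,y)c$, where $(\cdot,\cdot)$ is a nonzero scalar multiple of the Killing form. Let $\alpha_1,\dots,\alpha_{2n-1}$ be simple roots of $\mathfrak g$ (type $A_{2n-1}$, labeled along the chain), $\alpha^\flat=\alpha_1+\cdots+\alpha_{2n-1}$, and $\{E_\alpha,H_i\}$ a Chevalley basis of $\mathfrak g$. Set, for $1\le i\le n-1$, $\hat e_i=E_{\alpha_i}\otimes1-E_{-\alpha_{n+i}}\otimes1$, $\hat f_i=E_{-\alpha_i}\otimes1-E_{\alpha_{n+i}}\otimes1$, and $\hat e_n=E_{\alpha_n}\otimes1+E_{\alpha^\flat}\otimes t^{-1}$, $\hat f_n=E_{-\alpha_n}\otimes1+E_{-\alpha^\flat}\otimes t$. $\hat{\mathfrak g}_{fp}$ is the Lie subalgebra of $\hat{\mathfrak g}$ generated by $\hat e_i,\hat f_i$ ($1\le i\le n$). *)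

theory Defs
  imports Complex_Main
begin

text \<open>An element of the free associative algebra C<X> on generators of type 'g is a
  finitely supported function from words (lists of generators) to C.\<close>

type_synonym 'g fa = "'g list \<Rightarrow> complex"

definition FA :: "'g set \<Rightarrow> 'g fa set" where
  "FA S = {p. finite {w. p w \<noteq> 0} \<and> (\<forall>w. p w \<noteq> 0 \<longrightarrow> set w \<subseteq> S)}"

definition fa_zero :: "'g fa" where "fa_zero = (\<lambda>w. 0)"
definition fa_one :: "'g fa" where "fa_one = (\<lambda>w. if w = [] then 1 else 0)"
definition fa_gen :: "'g \<Rightarrow> 'g fa" where "fa_gen g = (\<lambda>w. if w = [g] then 1 else 0)"
definition fa_add :: "'g fa \<Rightarrow> 'g fa \<Rightarrow> 'g fa" where "fa_add p q = (\<lambda>w. p w + q w)"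
definition fa_sub :: "'g fa \<Rightarrow> 'g fa \<Rightarrow> 'g fa" where "fa_sub p q = (\<lambda>w. p w - q w)"
definition fa_smul :: "complex \<Rightarrow> 'g fa \<Rightarrow> 'g fa" where "fa_smul a p = (\<lambda>w. a * p w)"
definition fa_mul :: "'g fa \<Rightarrow> 'g fa \<Rightarrow> 'g fa" where
  "fa_mul p q = (\<lambda>w. \<Sum>k\<le>length w. p (take k w) * q (drop k w))"
definition fa_comm :: "'g fa \<Rightarrow> 'g fa \<Rightarrow> 'g fa" where
  "fa_comm p q = fa_sub (fa_mul p q) (fa_mul q p)"

inductive_set fa_ideal :: "'g fa set \<Rightarrow> 'g fa set \<Rightarrow> 'g fa set" for A R where
  gen: "r \<in> R \<Longrightarrow> r \<in> fa_ideal A R"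
| zero: "fa_zero \<in> fa_ideal A R"
| add: "x \<in> fa_ideal A R \<Longrightarrow> y \<in> fa_ideal A R \<Longrightarrow> fa_add x y \<in> fa_ideal A R"
| smul: "x \<in> fa_ideal A R \<Longrightarrow> fa_smul a x \<in> fa_ideal A R"
| lmul: "x \<in> fa_ideal A R \<Longrightarrow> p \<in> A \<Longrightarrow> fa_mul p x \<in> fa_ideal A R"
| rmul: "x \<in> fa_ideal A R \<Longrightarrow> p \<in> A \<Longrightarrow> fa_mul x p \<in> fa_ideal A R"

text \<open>Lie subalgebra (w.r.t. the commutator bracket) generated by S: the free Lie algebra
  on S when S is a set of free generators.\<close>
inductive_set fa_lie_span :: "'g fa set \<Rightarrow> 'g fa set" for S where
  gen: "s \<in> S \<Longrightarrow> s \<in> fa_lie_span S"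
| add: "x \<in> fa_lie_span S \<Longrightarrow> y \<in> fa_lie_span S \<Longrightarrow> fa_add x y \<in> fa_lie_span S"
| smul: "x \<in> fa_lie_span S \<Longrightarrow> fa_smul a x \<in> fa_lie_span S"
| comm: "x \<in> fa_lie_span S \<Longrightarrow> y \<in> fa_lie_span S \<Longrightarrow> fa_comm x y \<in> fa_lie_span S"

inductive_set fa_lie_ideal :: "'g fa set \<Rightarrow> 'g fa set \<Rightarrow> 'g fa set" for L R where
  gen: "r \<in> R \<Longrightarrow> r \<in> fa_lie_ideal L R"
| zero: "fa_zero \<in> fa_lie_ideal L R"
| add: "x \<in> fa_lie_ideal L R \<Longrightarrow> y \<in> fa_lie_ideal L R \<Longrightarrow> fa_add x y \<in> fa_lie_ideal L R"
| smul: "x \<in> fa_lie_ideal L R \<Longrightarrow> fa_smul a x \<in> fa_lie_ideal L R"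
| comm: "z \<in> L \<Longrightarrow> x \<in> fa_lie_ideal L R \<Longrightarrow> fa_comm z x \<in> fa_lie_ideal L R"

definition fa_ad_pow :: "nat \<Rightarrow> 'g fa \<Rightarrow> 'g fa \<Rightarrow> 'g fa" where
  "fa_ad_pow k x y = ((fa_comm x) ^^ k) y"

datatype gimgen = GE nat | GF nat | GH nat

definition Mn :: "nat \<Rightarrow> nat \<Rightarrow> nat \<Rightarrow> int" where
  "Mn n i j = (if i = j then 2
     else if j = i + 1 \<or> i = j + 1 then -1
     else if (i = 1 \<and> j = n) \<or> (i = n \<and> j = 1) then 1 else 0)"

definition gim_gens :: "nat \<Rightarrow> gimgen set" where
  "gim_gens n = {GE i | i. 1 \<le> i \<and> i \<le> n} \<union> {GF i | i. 1 \<le> i \<and> i \<le> n} \<union> {GH i | i. 1 \<le> i \<and> i \<le> n}"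

abbreviation "ge i \<equiv> fa_gen (GE i)"
abbreviation "gf i \<equiv> fa_gen (GF i)"
abbreviation "gh i \<equiv> fa_gen (GH i)"

text \<open>The defining relations (R1)-(R3), each written as an element r meaning r = 0,
  with brackets interpreted as commutators.\<close>
definition gim_rels :: "nat \<Rightarrow> gimgen fa set" where
  "gim_rels n =
     {fa_sub (fa_comm (gh i) (ge j)) (fa_smul (of_int (Mn n i j)) (ge j)) | i j.
        i \<in> {1..n} \<and> j \<in> {1..n}}
   \<union> {fa_add (fa_comm (gh i) (gf j)) (fa_smul (of_int (Mn n i j)) (gf j)) | i j.
        i \<in> {1..n} \<and> j \<in> {1..n}}
   \<union> {fa_sub (fa_comm (ge i) (gf i)) (gh i) | i. i \<in> {1..n}}
   \<union> {r | r i j. i \<in> {1..n} \<and> j \<in> {1..n} \<and> i \<noteq> j \<and> Mn n i j \<le> 0 \<and>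
        r \<in> {fa_comm (ge i) (gf j), fa_comm (gf i) (ge j),
             fa_ad_pow (nat (1 - Mn n i j)) (ge i) (ge j),
             fa_ad_pow (nat (1 - Mn n i j)) (gf i) (gf j)}}
   \<union> {r | r i j. i \<in> {1..n} \<and> j \<in> {1..n} \<and> i \<noteq> j \<and> Mn n i j > 0 \<and>
        r \<in> {fa_comm (ge i) (ge j), fa_comm (gf i) (gf j),
             fa_ad_pow (nat (Mn n i j + 1)) (ge i) (gf j),
             fa_ad_pow (nat (Mn n i j + 1)) (gf i) (ge j)}}"

text \<open>Free Lie algebra on the generators e_i, f_i, h_i (inside the free associative algebra)
  and the Lie ideal generated by the relations; gim(M_n) = gim_FL n / gim_I n.\<close>
definition gim_FL :: "nat \<Rightarrow> gimgen fa set" where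
  "gim_FL n = fa_lie_span (fa_gen ` gim_gens n)"

definition gim_I :: "nat \<Rightarrow> gimgen fa set" where
  "gim_I n = fa_lie_ideal (gim_FL n) (gim_rels n)"

text \<open>U(gim(M_n)) = FA (gim_gens n) / gim_J n (free associative algebra modulo the
  two-sided ideal generated by the relations).\<close>
definition gim_J :: "nat \<Rightarrow> gimgen fa set" where
  "gim_J n = fa_ideal (FA (gim_gens n)) (gim_rels n)"

text \<open>Matrices are functions nat => nat => complex; only entries with indices < N matter
  (N = 2n). Matrix units use 0-based indices.\<close>
type_synonym mat = "nat \<Rightarrow> nat \<Rightarrow> complex"

definition munit :: "nat \<Rightarrow> nat \<Rightarrow> mat" where
  "munit i j = (\<lambda>a b. if a = i \<and> b = j then 1 else 0)"
definition madd :: "mat \<Rightarrow> mat \<Rightarrow> mat" where "madd A B = (\<lambda>a b. A a b + B a b)"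
definition msub :: "mat \<Rightarrow> mat \<Rightarrow> mat" where "msub A B = (\<lambda>a b. A a b - B a b)"
definition mmul :: "nat \<Rightarrow> mat \<Rightarrow> mat \<Rightarrow> mat" where
  "mmul N A B = (\<lambda>a b. \<Sum>k<N. A a k * B k b)"
definition mbr :: "nat \<Rightarrow> mat \<Rightarrow> mat \<Rightarrow> mat" where
  "mbr N A B = msub (mmul N A B) (mmul N B A)"
definition mtr :: "nat \<Rightarrow> mat \<Rightarrow> complex" where
  "mtr N A = (\<Sum>a<N. A a a)"

text \<open>Element of the affine algebra: (X, c) standing for sum_m X m (x) t^m + c c,
  with X finitely supported.\<close>
type_synonym aff = "(int \<Rightarrow> mat) \<times> complex"

definition asupp :: "(int \<Rightarrow> mat) \<Rightarrow> int set" where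
  "asupp X = {m. X m \<noteq> (\<lambda>a b. 0)}"

definition aff_add :: "aff \<Rightarrow> aff \<Rightarrow> aff" where
  "aff_add x y = ((\<lambda>m. madd (fst x m) (fst y m)), snd x + snd y)"
definition aff_smul :: "complex \<Rightarrow> aff \<Rightarrow> aff" where
  "aff_smul s x = ((\<lambda>m a b. s * fst x m a b), s * snd x)"

text \<open>Bracket: [x t^m, y t^k] = [x,y] t^(m+k) + m delta_(m,-k) (x,y) c,
  where (x,y) = kappa * tr(xy) (a nonzero multiple of the Killing form of sl_N).\<close>
definition aff_br :: "nat \<Rightarrow> complex \<Rightarrow> aff \<Rightarrow> aff \<Rightarrow> aff" where
  "aff_br N \<kappa> x y =
     ((\<lambda>k. \<lambda>a b. \<Sum>m\<in>asupp (fst x). mbr N (fst x m) (fst y (k - m)) a b),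
      (\<Sum>m\<in>asupp (fst x). of_int m * \<kappa> * mtr N (mmul N (fst x m) (fst y (- m)))))"

definition aff_single :: "int \<Rightarrow> mat \<Rightarrow> aff" where
  "aff_single m A = ((\<lambda>k. if k = m then A else (\<lambda>a b. 0)), 0)"

text \<open>Simple roots alpha_1..alpha_(2n-1): E_(alpha_i) = munit (i-1) i,
  E_(-alpha_i) = munit i (i-1); E_(alpha^flat) = munit 0 (2n-1).\<close>
definition Epos :: "nat \<Rightarrow> mat" where "Epos i = munit (i - 1) i"
definition Eneg :: "nat \<Rightarrow> mat" where "Eneg i = munit i (i - 1)"

definition hat_e :: "nat \<Rightarrow> nat \<Rightarrow> aff" where
  "hat_e n i = (if i = n
     then aff_add (aff_single 0 (Epos n)) (aff_single (-1) (munit 0 (2*n - 1)))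
     else aff_single 0 (msub (Epos i) (Eneg (n + i))))"

definition hat_f :: "nat \<Rightarrow> nat \<Rightarrow> aff" where
  "hat_f n i = (if i = n
     then aff_add (aff_single 0 (Eneg n)) (aff_single 1 (munit (2*n - 1) 0))
     else aff_single 0 (msub (Eneg i) (Epos (n + i))))"

inductive_set aff_lie_span :: "nat \<Rightarrow> complex \<Rightarrow> aff set \<Rightarrow> aff set" for N \<kappa> S where
  gen: "s \<in> S \<Longrightarrow> s \<in> aff_lie_span N \<kappa> S"
| add: "x \<in> aff_lie_span N \<kappa> S \<Longrightarrow> y \<in> aff_lie_span N \<kappa> S \<Longrightarrow> aff_add x y \<in> aff_lie_span N \<kappa> S"
| smul: "x \<in> aff_lie_span N \<kappa> S \<Longrightarrow> aff_smul a x \<in> aff_lie_span N \<kappa> S"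
| br: "x \<in> aff_lie_span N \<kappa> S \<Longrightarrow> y \<in> aff_lie_span N \<kappa> S \<Longrightarrow> aff_br N \<kappa> x y \<in> aff_lie_span N \<kappa> S"

definition g_fp :: "nat \<Rightarrow> complex \<Rightarrow> aff set" where
  "g_fp n \<kappa> = aff_lie_span (2*n) \<kappa> ({hat_e n i | i. 1 \<le> i \<and> i \<le> n} \<union> {hat_f n i | i. 1 \<le> i \<and> i \<le> n})"

text \<open>U(hat g_fp) = FA (g_fp) / U_fp_K (tensor algebra of g_fp, i.e. free algebra on the
  set g_fp modulo linearity, modulo x y - y x - [x,y]).\<close>
definition U_fp_K :: "nat \<Rightarrow> complex \<Rightarrow> aff fa set" where
  "U_fp_K n \<kappa> = fa_ideal (FA (g_fp n \<kappa>))
     ({fa_sub (fa_gen (aff_add x y)) (fa_add (fa_gen x) (fa_gen y)) | x y.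
          x \<in> g_fp n \<kappa> \<and> y \<in> g_fp n \<kappa>}
    \<union> {fa_sub (fa_gen (aff_smul a x)) (fa_smul a (fa_gen x)) | a x. x \<in> g_fp n \<kappa>}
    \<union> {fa_sub (fa_comm (fa_gen x) (fa_gen y)) (fa_gen (aff_br (2*n) \<kappa> x y)) | x y.
          x \<in> g_fp n \<kappa> \<and> y \<in> g_fp n \<kappa>})"

text \<open>Phi (on representatives) induces a unital associative algebra homomorphism
  A/J -> B/K.\<close>
definition assoc_hom_quot :: "'g fa set \<Rightarrow> 'g fa set \<Rightarrow> 'h fa set \<Rightarrow> 'h fa set \<Rightarrow> ('g fa \<Rightarrow> 'h fa) \<Rightarrow> bool" where
  "assoc_hom_quot A J B K \<Phi> \<longleftrightarrow>
     (\<forall>p\<in>A. \<Phi> p \<in> B) \<and>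
     (\<forall>p\<in>J. \<Phi> p \<in> K) \<and>
     (\<forall>p\<in>A. \<forall>q\<in>A. fa_sub (\<Phi> (fa_add p q)) (fa_add (\<Phi> p) (\<Phi> q)) \<in> K) \<and>
     (\<forall>a. \<forall>p\<in>A. fa_sub (\<Phi> (fa_smul a p)) (fa_smul a (\<Phi> p)) \<in> K) \<and>
     (\<forall>p\<in>A. \<forall>q\<in>A. fa_sub (\<Phi> (fa_mul p q)) (fa_mul (\<Phi> p) (\<Phi> q)) \<in> K) \<and>
     fa_sub (\<Phi> fa_one) fa_one \<in> K"

text \<open>psi induces a Lie algebra homomorphism L/I -> hat g (N, kappa).\<close>
definition lie_hom_quot :: "'g fa set \<Rightarrow> 'g fa set \<Rightarrow> nat \<Rightarrow> complex \<Rightarrow> ('g fa \<Rightarrow> aff) \<Rightarrow> bool" where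
  "lie_hom_quot L I N \<kappa> \<psi> \<longleftrightarrow>
     (\<forall>x\<in>L. \<forall>y\<in>L. \<psi> (fa_add x y) = aff_add (\<psi> x) (\<psi> y)) \<and>
     (\<forall>a. \<forall>x\<in>L. \<psi> (fa_smul a x) = aff_smul a (\<psi> x)) \<and>
     (\<forall>x\<in>L. \<forall>y\<in>L. \<psi> (fa_comm x y) = aff_br N \<kappa> (\<psi> x) (\<psi> y)) \<and>
     (\<forall>x\<in>I. \<psi> x = ((\<lambda>m a b. 0), 0))"

end

theory Submission
  imports Defs
begin

text \<open>The Lie map \<open>\<psi>\<close> is built on the whole free associative algebra on the generators: a word
  \<open>g\<^sub>1 \<dots> g\<^sub>k\<close> goes to the product \<open>\<rho>(g\<^sub>1) \<cdots> \<rho>(g\<^sub>k)\<close> of the loop matrices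
  representing the generators, together with a central charge \<open>F(g\<^sub>1 \<dots> g\<^sub>k)\<close>. This is a homomorphism
  from the commutator Lie algebra of the free algebra to the affine algebra as soon as
  \<open>F(uv) - F(vu) = \<omega>(\<rho>(u), \<rho>(v))\<close> for the cocycle \<open>\<omega>(X, Y) = \<kappa> tr((X' Y)\<^sub>0)\<close>, where \<open>'\<close> is \<open>t d/dt\<close>. Such an \<open>F\<close> exists
  because \<open>\<omega>\<close> is made of a trace and a derivation: the Leibniz terms of \<open>(\<rho>(w))'\<close> have traces
  summing to zero that are permuted cyclically under rotation of \<open>w\<close>, and a position-weighted
  average of them is a primitive. On the free Lie algebra, the defining relations of \<open>gim(M_n)\<close>
  are then checked by explicit computations with matrix units, so \<open>\<psi>\<close> kills the relation ideal.
  The associative map \<open>\<Phi>\<close> substitutes the elements \<open>\<psi>(g)\<close> of \<open>g_fp\<close> for the generators, and by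
  induction over Lie words \<open>\<Phi>(x) \<equiv> \<psi>(x)\<close> modulo the ideal defining \<open>U(g_fp)\<close>; hence \<open>\<Phi>\<close> maps the
  relation ideal of \<open>U(gim(M_n))\<close> into that ideal.\<close>

definition fa_supp :: "'g fa \<Rightarrow> 'g list set" where
  "fa_supp p = {w. p w \<noteq> 0}"

definition fa_lin :: "'g fa \<Rightarrow> ('g list \<Rightarrow> complex) \<Rightarrow> complex" where
  "fa_lin p G = (\<Sum>w\<in>fa_supp p. p w * G w)"

lemma fa_lin_superset:
  assumes "finite S" "fa_supp p \<subseteq> S"
  shows "fa_lin p G = (\<Sum>w\<in>S. p w * G w)"
  unfolding fa_lin_def
  by (rule sum.mono_neutral_left) (use assms in \<open>auto simp: fa_supp_def\<close>)

lemma fa_supp_add: "fa_supp (fa_add p q) \<subseteq> fa_supp p \<union> fa_supp q"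
  by (auto simp: fa_supp_def fa_add_def)

lemma fa_supp_sub: "fa_supp (fa_sub p q) \<subseteq> fa_supp p \<union> fa_supp q"
  by (auto simp: fa_supp_def fa_sub_def)

lemma fa_supp_smul: "fa_supp (fa_smul a p) \<subseteq> fa_supp p"
  by (auto simp: fa_supp_def fa_smul_def)

lemma fa_supp_gen: "fa_supp (fa_gen g) = {[g]}"
  by (auto simp: fa_supp_def fa_gen_def)

lemma fa_supp_mul: "fa_supp (fa_mul p q) \<subseteq> (\<lambda>(u, v). u @ v) ` (fa_supp p \<times> fa_supp q)"
proof
  fix w assume "w \<in> fa_supp (fa_mul p q)"
  then have "(\<Sum>k\<le>length w. p (take k w) * q (drop k w)) \<noteq> 0"
    by (simp add: fa_supp_def fa_mul_def)
  then obtain k where "p (take k w) * q (drop k w) \<noteq> 0"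
    by (meson sum.not_neutral_contains_not_neutral)
  then show "w \<in> (\<lambda>(u, v). u @ v) ` (fa_supp p \<times> fa_supp q)"
    by (auto simp: fa_supp_def intro!: image_eqI[where x = "(take k w, drop k w)"])
qed

lemma finite_fa_supp_smul: "finite (fa_supp p) \<Longrightarrow> finite (fa_supp (fa_smul a p))"
  using finite_subset[OF fa_supp_smul] .

lemma finite_fa_supp_mul:
  "finite (fa_supp p) \<Longrightarrow> finite (fa_supp q) \<Longrightarrow> finite (fa_supp (fa_mul p q))"
  by (rule finite_subset[OF fa_supp_mul]) auto

lemma finite_fa_supp_comm:
  "finite (fa_supp p) \<Longrightarrow> finite (fa_supp q) \<Longrightarrow> finite (fa_supp (fa_comm p q))"
  unfolding fa_comm_def by (rule finite_subset[OF fa_supp_sub]) (simp add: finite_fa_supp_mul)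

lemma fa_lin_add:
  assumes "finite (fa_supp p)" "finite (fa_supp q)"
  shows "fa_lin (fa_add p q) G = fa_lin p G + fa_lin q G"
proof -
  let ?S = "fa_supp p \<union> fa_supp q"
  have "fa_lin (fa_add p q) G = (\<Sum>w\<in>?S. fa_add p q w * G w)"
    by (rule fa_lin_superset) (use assms fa_supp_add in auto)
  also have "\<dots> = (\<Sum>w\<in>?S. p w * G w) + (\<Sum>w\<in>?S. q w * G w)"
    by (simp add: fa_add_def distrib_right sum.distrib)
  also have "\<dots> = fa_lin p G + fa_lin q G"
    using assms by (simp add: fa_lin_superset[of ?S])
  finally show ?thesis .
qed

lemma fa_lin_sub:
  assumes "finite (fa_supp p)" "finite (fa_supp q)"
  shows "fa_lin (fa_sub p q) G = fa_lin p G - fa_lin q G"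
proof -
  let ?S = "fa_supp p \<union> fa_supp q"
  have "fa_lin (fa_sub p q) G = (\<Sum>w\<in>?S. fa_sub p q w * G w)"
    by (rule fa_lin_superset) (use assms fa_supp_sub in auto)
  also have "\<dots> = (\<Sum>w\<in>?S. p w * G w) - (\<Sum>w\<in>?S. q w * G w)"
    by (simp add: fa_sub_def left_diff_distrib sum_subtractf)
  also have "\<dots> = fa_lin p G - fa_lin q G"
    using assms by (simp add: fa_lin_superset[of ?S])
  finally show ?thesis .
qed

lemma fa_lin_smul:
  assumes "finite (fa_supp p)"
  shows "fa_lin (fa_smul a p) G = a * fa_lin p G"
proof -
  have "fa_lin (fa_smul a p) G = (\<Sum>w\<in>fa_supp p. fa_smul a p w * G w)"
    by (rule fa_lin_superset) (use assms fa_supp_smul in auto)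
  then show ?thesis
    by (simp add: fa_lin_def fa_smul_def sum_distrib_left mult.assoc)
qed

lemma fa_lin_gen: "fa_lin (fa_gen g) G = G [g]"
  unfolding fa_lin_def fa_supp_gen by (simp add: fa_gen_def)

lemma fa_lin_one: "fa_lin fa_one G = G []"
  by (simp add: fa_lin_def fa_supp_def fa_one_def)

lemma fa_lin_zero: "fa_lin fa_zero G = 0"
  by (simp add: fa_lin_def fa_supp_def fa_zero_def)

lemma sum_swap_outer:
  "(\<Sum>k\<in>K. \<Sum>u\<in>U. \<Sum>v\<in>V. f k u v) = (\<Sum>u\<in>U. \<Sum>v\<in>V. \<Sum>k\<in>K. f k u v)"
  by (subst sum.swap, rule sum.cong[OF refl], rule sum.swap)

lemma sum_swap_pairs:
  "(\<Sum>p\<in>P. \<Sum>c\<in>C. \<Sum>m\<in>M. \<Sum>d\<in>D. f p c m d) = (\<Sum>m\<in>M. \<Sum>d\<in>D. \<Sum>p\<in>P. \<Sum>c\<in>C. f p c m d)"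
proof -
  have "(\<Sum>p\<in>P. \<Sum>c\<in>C. \<Sum>m\<in>M. \<Sum>d\<in>D. f p c m d) = (\<Sum>p\<in>P. \<Sum>m\<in>M. \<Sum>d\<in>D. \<Sum>c\<in>C. f p c m d)"
    by (rule sum.cong[OF refl], rule sum_swap_outer)
  also have "\<dots> = (\<Sum>m\<in>M. \<Sum>d\<in>D. \<Sum>p\<in>P. \<Sum>c\<in>C. f p c m d)"
    by (rule sum_swap_outer)
  finally show ?thesis .
qed

lemma sum_splittings_delta:
  "(\<Sum>k\<le>length w. if take k w = u \<and> drop k w = v then c else 0) = (if w = u @ v then c else 0)"
proof (cases "w = u @ v")
  case True
  have "(take k w = u \<and> drop k w = v) \<longleftrightarrow> k = length u" if "k \<le> length w" for k
    using that True by (metis append_eq_conv_conj length_take min.absorb2)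
  then have "(\<Sum>k\<le>length w. if take k w = u \<and> drop k w = v then c else 0)
      = (\<Sum>k\<le>length w. if k = length u then c else 0)"
    by (intro sum.cong) auto
  then show ?thesis using True by simp
next
  case False
  then show ?thesis by (auto intro!: sum.neutral)
qed

lemma fa_lin_mul:
  assumes fp: "finite (fa_supp p)" and fq: "finite (fa_supp q)"
  shows "fa_lin (fa_mul p q) G = (\<Sum>u\<in>fa_supp p. \<Sum>v\<in>fa_supp q. p u * q v * G (u @ v))"
proof -
  let ?C = "(\<lambda>(u, v). u @ v) ` (fa_supp p \<times> fa_supp q)"
  let ?t = "\<lambda>w k u v. if take k w = u \<and> drop k w = v then p u * q v * G w else 0"
  have fC: "finite ?C" using fp fq by auto
  have split: "p (take k w) * q (drop k w) * G w = (\<Sum>u\<in>fa_supp p. \<Sum>v\<in>fa_supp q. ?t w k u v)"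
    for w k
  proof -
    have "(\<Sum>u\<in>fa_supp p. \<Sum>v\<in>fa_supp q. ?t w k u v) = (\<Sum>u\<in>fa_supp p.
        if take k w = u then \<Sum>v\<in>fa_supp q. if drop k w = v then p u * q v * G w else 0 else 0)"
      by (intro sum.cong) auto
    then show ?thesis using fp fq by (simp add: sum.delta' fa_supp_def)
  qed
  have "fa_lin (fa_mul p q) G = (\<Sum>w\<in>?C. fa_mul p q w * G w)"
    by (rule fa_lin_superset[OF fC fa_supp_mul])
  also have "\<dots> = (\<Sum>w\<in>?C. \<Sum>k\<le>length w. \<Sum>u\<in>fa_supp p. \<Sum>v\<in>fa_supp q. ?t w k u v)"
    unfolding fa_mul_def sum_distrib_right by (intro sum.cong refl split)
  also have "\<dots> = (\<Sum>w\<in>?C. \<Sum>u\<in>fa_supp p. \<Sum>v\<in>fa_supp q. \<Sum>k\<le>length w. ?t w k u v)"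
    by (intro sum.cong refl sum_swap_outer)
  also have "\<dots> = (\<Sum>u\<in>fa_supp p. \<Sum>v\<in>fa_supp q. \<Sum>w\<in>?C. \<Sum>k\<le>length w. ?t w k u v)"
    by (rule sum_swap_outer)
  also have "\<dots> = (\<Sum>u\<in>fa_supp p. \<Sum>v\<in>fa_supp q. p u * q v * G (u @ v))"
  proof (intro sum.cong refl)
    fix u v assume "u \<in> fa_supp p" "v \<in> fa_supp q"
    then have "u @ v \<in> ?C" by (auto intro!: image_eqI[of _ _ "(u, v)"])
    then show "(\<Sum>w\<in>?C. \<Sum>k\<le>length w. ?t w k u v) = p u * q v * G (u @ v)"
      using fC by (simp add: sum_splittings_delta sum.delta' cong: if_cong)
  qed
  finally show ?thesis .
qed

section \<open>Loop matrices\<close>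

text \<open>A loop matrix \<open>X\<close> stands for \<open>\<Sum>m. X m \<otimes> t\<^sup>m\<close>, as in the first component of \<open>aff\<close>.\<close>
type_synonym loop = "int \<Rightarrow> mat"

definition loop_mul :: "nat \<Rightarrow> loop \<Rightarrow> loop \<Rightarrow> loop" where
  "loop_mul N X Y = (\<lambda>k a b. \<Sum>m\<in>asupp X. mmul N (X m) (Y (k - m)) a b)"

definition loop_one :: "nat \<Rightarrow> loop" where
  "loop_one N = (\<lambda>k a b. if k = 0 \<and> a = b \<and> a < N then 1 else 0)"

definition loop_bounded :: "nat \<Rightarrow> loop \<Rightarrow> bool" where
  "loop_bounded N X \<longleftrightarrow> (\<forall>k a b. N \<le> a \<or> N \<le> b \<longrightarrow> X k a b = 0)"

definition loop_deriv :: "loop \<Rightarrow> loop" where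
  "loop_deriv X = (\<lambda>k a b. of_int k * X k a b)"

definition loop_trace :: "nat \<Rightarrow> loop \<Rightarrow> complex" where
  "loop_trace N X = mtr N (X 0)"

text \<open>The central component of \<open>aff_br\<close>.\<close>
definition loop_cocycle :: "nat \<Rightarrow> complex \<Rightarrow> loop \<Rightarrow> loop \<Rightarrow> complex" where
  "loop_cocycle N \<kappa> X Y = (\<Sum>m\<in>asupp X. of_int m * \<kappa> * mtr N (mmul N (X m) (Y (- m))))"

lemma not_in_asupp_iff: "m \<notin> asupp X \<longleftrightarrow> (\<forall>a b. X m a b = 0)"
  by (auto simp: asupp_def fun_eq_iff)

lemma in_asuppI: "X m a b \<noteq> 0 \<Longrightarrow> m \<in> asupp X"
  using not_in_asupp_iff by blast

lemma loop_mul_eq_sum: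
  assumes "finite S" "asupp X \<subseteq> S"
  shows "loop_mul N X Y k a b = (\<Sum>m\<in>S. \<Sum>c<N. X m a c * Y (k - m) c b)"
  unfolding loop_mul_def mmul_def
  by (rule sum.mono_neutral_left) (use assms in \<open>auto simp: not_in_asupp_iff\<close>)

lemma asupp_loop_mul:
  "asupp (loop_mul N X Y) \<subseteq> (\<lambda>(m, l). m + l) ` (asupp X \<times> asupp Y)"
proof
  fix k assume k: "k \<in> asupp (loop_mul N X Y)"
  show "k \<in> (\<lambda>(m, l). m + l) ` (asupp X \<times> asupp Y)"
  proof (rule ccontr)
    assume nk: "k \<notin> (\<lambda>(m, l). m + l) ` (asupp X \<times> asupp Y)"
    have "mmul N (X m) (Y (k - m)) a b = 0" if "m \<in> asupp X" for m a b
    proof -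
      have "k - m \<notin> asupp Y" using nk that by (auto intro!: image_eqI[of _ _ "(m, k - m)"])
      then show ?thesis by (simp add: mmul_def not_in_asupp_iff)
    qed
    then have "loop_mul N X Y k a b = 0" for a b
      unfolding loop_mul_def by (simp add: sum.neutral)
    then show False using k by (auto simp: asupp_def fun_eq_iff)
  qed
qed

lemma finite_asupp_loop_mul:
  "finite (asupp X) \<Longrightarrow> finite (asupp Y) \<Longrightarrow> finite (asupp (loop_mul N X Y))"
  by (rule finite_subset[OF asupp_loop_mul]) auto

lemma loop_mul_assoc:
  assumes fX: "finite (asupp X)" and fY: "finite (asupp Y)"
  shows "loop_mul N (loop_mul N X Y) Z = loop_mul N X (loop_mul N Y Z)"
proof (intro ext)
  fix k a b
  let ?SX = "asupp X" and ?SXY = "(\<lambda>(m, l). m + l) ` (asupp X \<times> asupp Y)"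
  have fXY: "finite ?SXY" using fX fY by simp
  have "loop_mul N (loop_mul N X Y) Z k a b
      = (\<Sum>p\<in>?SXY. \<Sum>c<N. loop_mul N X Y p a c * Z (k - p) c b)"
    by (rule loop_mul_eq_sum[OF fXY asupp_loop_mul])
  also have "\<dots> = (\<Sum>p\<in>?SXY. \<Sum>c<N. \<Sum>m\<in>?SX. \<Sum>d<N. X m a d * (Y (p - m) d c * Z (k - p) c b))"
    by (simp add: loop_mul_eq_sum[OF fX subset_refl] sum_distrib_right mult.assoc)
  also have "\<dots> = (\<Sum>m\<in>?SX. \<Sum>d<N. \<Sum>p\<in>?SXY. \<Sum>c<N. X m a d * (Y (p - m) d c * Z (k - p) c b))"
    by (rule sum_swap_pairs)
  also have "\<dots> = (\<Sum>m\<in>?SX. \<Sum>d<N. X m a d * loop_mul N Y Z (k - m) d b)"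
  proof (intro sum.cong refl)
    fix m d assume m: "m \<in> ?SX"
    have inj: "inj_on (\<lambda>p. p - m) ?SXY" by (simp add: inj_on_def)
    have "(\<Sum>p\<in>?SXY. \<Sum>c<N. Y (p - m) d c * Z (k - p) c b)
        = (\<Sum>q\<in>(\<lambda>p. p - m) ` ?SXY. \<Sum>c<N. Y q d c * Z (k - m - q) c b)"
      by (simp add: sum.reindex[OF inj] algebra_simps)
    also have "\<dots> = loop_mul N Y Z (k - m) d b"
      by (rule loop_mul_eq_sum[symmetric]) (use fXY m in \<open>auto intro!: image_eqI[of _ _ "m + _"]\<close>)
    finally show "(\<Sum>p\<in>?SXY. \<Sum>c<N. X m a d * (Y (p - m) d c * Z (k - p) c b))
        = X m a d * loop_mul N Y Z (k - m) d b"
      by (simp add: sum_distrib_left[symmetric])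
  qed
  also have "\<dots> = loop_mul N X (loop_mul N Y Z) k a b"
    by (rule loop_mul_eq_sum[OF fX subset_refl, symmetric])
  finally show "loop_mul N (loop_mul N X Y) Z k a b = loop_mul N X (loop_mul N Y Z) k a b" .
qed

lemma asupp_loop_one: "asupp (loop_one N) \<subseteq> {0}"
  by (auto simp: asupp_def loop_one_def fun_eq_iff)

lemma loop_mul_one_right:
  assumes fX: "finite (asupp X)" and bX: "loop_bounded N X"
  shows "loop_mul N X (loop_one N) = X"
proof (intro ext)
  fix k a b
  have "loop_mul N X (loop_one N) k a b
      = (\<Sum>m\<in>asupp X. \<Sum>c<N. X m a c * loop_one N (k - m) c b)"
    by (rule loop_mul_eq_sum[OF fX subset_refl])
  also have "\<dots> = (\<Sum>m\<in>asupp X. if m = k \<and> b < N then X m a b else 0)"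
  proof (rule sum.cong[OF refl])
    fix m
    have "(\<Sum>c<N. X m a c * loop_one N (k - m) c b)
        = (\<Sum>c<N. if c = b then (if m = k \<and> b < N then X m a b else 0) else 0)"
      by (rule sum.cong[OF refl]) (auto simp: loop_one_def)
    then show "(\<Sum>c<N. X m a c * loop_one N (k - m) c b) = (if m = k \<and> b < N then X m a b else 0)"
      by (simp add: sum.delta')
  qed
  also have "\<dots> = X k a b"
  proof (cases "b < N")
    case True
    then show ?thesis using fX by (auto simp: sum.delta' not_in_asupp_iff)
  next
    case False
    then show ?thesis using bX by (auto simp: loop_bounded_def)
  qed
  finally show "loop_mul N X (loop_one N) k a b = X k a b" .
qed

lemma loop_mul_one_left:
  assumes "loop_bounded N Y"
  shows "loop_mul N (loop_one N) Y = Y"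
proof (intro ext)
  fix k a b
  have "loop_mul N (loop_one N) Y k a b = (\<Sum>m\<in>{0}. \<Sum>c<N. loop_one N m a c * Y (k - m) c b)"
    by (rule loop_mul_eq_sum[OF _ asupp_loop_one]) simp
  also have "\<dots> = (\<Sum>c<N. loop_one N 0 a c * Y k c b)" by simp
  also have "\<dots> = (\<Sum>c<N. if c = a then (if a < N then Y k a b else 0) else 0)"
    by (rule sum.cong[OF refl]) (simp add: loop_one_def)
  also have "\<dots> = Y k a b"
    using assms by (auto simp: sum.delta' loop_bounded_def)
  finally show "loop_mul N (loop_one N) Y k a b = Y k a b" .
qed

lemma loop_bounded_mul: "loop_bounded N X \<Longrightarrow> loop_bounded N Y \<Longrightarrow> loop_bounded N (loop_mul N X Y)"
  by (auto simp: loop_bounded_def loop_mul_def mmul_def)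

lemma loop_bounded_one: "loop_bounded N (loop_one N)"
  by (auto simp: loop_bounded_def loop_one_def)

lemma loop_bounded_deriv: "loop_bounded N X \<Longrightarrow> loop_bounded N (loop_deriv X)"
  by (simp add: loop_bounded_def loop_deriv_def)

lemma asupp_loop_deriv: "asupp (loop_deriv X) \<subseteq> asupp X"
  by (auto simp: asupp_def loop_deriv_def fun_eq_iff)

lemma finite_asupp_loop_deriv: "finite (asupp X) \<Longrightarrow> finite (asupp (loop_deriv X))"
  using asupp_loop_deriv finite_subset by blast

lemma loop_deriv_mul:
  assumes fX: "finite (asupp X)"
  shows "loop_deriv (loop_mul N X Y) k a b
    = loop_mul N (loop_deriv X) Y k a b + loop_mul N X (loop_deriv Y) k a b"
proof -
  have "loop_mul N (loop_deriv X) Y k a b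
      = (\<Sum>m\<in>asupp X. \<Sum>c<N. loop_deriv X m a c * Y (k - m) c b)"
    by (rule loop_mul_eq_sum[OF fX asupp_loop_deriv])
  moreover have "loop_mul N X (loop_deriv Y) k a b
      = (\<Sum>m\<in>asupp X. \<Sum>c<N. X m a c * loop_deriv Y (k - m) c b)"
    by (rule loop_mul_eq_sum[OF fX subset_refl])
  moreover have "loop_mul N X Y k a b = (\<Sum>m\<in>asupp X. \<Sum>c<N. X m a c * Y (k - m) c b)"
    by (rule loop_mul_eq_sum[OF fX subset_refl])
  ultimately show ?thesis
    by (simp add: loop_deriv_def sum_distrib_left sum.distrib[symmetric] algebra_simps)
qed

lemma loop_trace_deriv: "loop_trace N (loop_deriv X) = 0"
  by (simp add: loop_trace_def loop_deriv_def mtr_def)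

lemma loop_trace_mul_commute:
  assumes fX: "finite (asupp X)" and fY: "finite (asupp Y)"
  shows "loop_trace N (loop_mul N X Y) = loop_trace N (loop_mul N Y X)"
proof -
  let ?S = "asupp X \<union> uminus ` asupp Y"
  have fS: "finite ?S" using fX fY by simp
  have "loop_trace N (loop_mul N Y X) = (\<Sum>a<N. \<Sum>l\<in>uminus ` ?S. \<Sum>c<N. Y l a c * X (0 - l) c a)"
    unfolding loop_trace_def mtr_def
    by (intro sum.cong refl loop_mul_eq_sum) (use fX fY in \<open>auto simp: image_Un image_image\<close>)
  also have "\<dots> = (\<Sum>a<N. \<Sum>m\<in>?S. \<Sum>c<N. Y (- m) a c * X m c a)"
    by (rule sum.cong[OF refl], subst sum.reindex) (auto simp: inj_on_def)
  also have "\<dots> = (\<Sum>m\<in>?S. \<Sum>a<N. \<Sum>c<N. Y (- m) a c * X m c a)"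
    by (rule sum.swap)
  also have "\<dots> = (\<Sum>m\<in>?S. \<Sum>c<N. \<Sum>a<N. X m c a * Y (0 - m) a c)"
    by (rule sum.cong[OF refl], subst sum.swap) (simp add: mult.commute)
  also have "\<dots> = (\<Sum>c<N. \<Sum>m\<in>?S. \<Sum>a<N. X m c a * Y (0 - m) a c)"
    by (rule sum.swap)
  also have "\<dots> = loop_trace N (loop_mul N X Y)"
    unfolding loop_trace_def mtr_def
    by (intro sum.cong refl loop_mul_eq_sum[symmetric]) (use fS in auto)
  finally show ?thesis by simp
qed

lemma loop_mul_swapped_sum:
  assumes "finite S" "asupp X \<subseteq> S" and fY: "finite (asupp Y)"
  shows "(\<Sum>m\<in>S. mmul N (Y (k - m)) (X m) a b) = loop_mul N Y X k a b"
proof -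
  let ?g = "\<lambda>l. \<Sum>c<N. Y l a c * X (k - l) c b"
  have "inj_on (\<lambda>m. k - m) S" by (simp add: inj_on_def)
  then have "(\<Sum>m\<in>S. mmul N (Y (k - m)) (X m) a b) = (\<Sum>l\<in>(\<lambda>m. k - m) ` S. ?g l)"
    by (simp add: mmul_def sum.reindex o_def)
  also have "\<dots> = (\<Sum>l\<in>asupp Y. ?g l)"
  proof (rule sum.mono_neutral_cong)
    fix l assume "l \<in> (\<lambda>m. k - m) ` S - asupp Y"
    then show "?g l = 0" by (simp add: not_in_asupp_iff)
  next
    fix l assume l: "l \<in> asupp Y - (\<lambda>m. k - m) ` S"
    have "k - l \<notin> S"
      using l by (auto intro: image_eqI[of l _ "k - l"])
    then have "k - l \<notin> asupp X" using assms(2) by blast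
    then show "?g l = 0" by (simp add: not_in_asupp_iff)
  qed (use assms in auto)
  also have "\<dots> = loop_mul N Y X k a b"
    by (rule loop_mul_eq_sum[symmetric]) (use fY in auto)
  finally show ?thesis .
qed

lemma loop_cocycle_eq_sum:
  assumes "finite S" "asupp X \<subseteq> S"
  shows "loop_cocycle N \<kappa> X Y = (\<Sum>m\<in>S. of_int m * \<kappa> * mtr N (mmul N (X m) (Y (- m))))"
  unfolding loop_cocycle_def
  by (rule sum.mono_neutral_left) (use assms in \<open>auto simp: not_in_asupp_iff mtr_def mmul_def\<close>)

lemma loop_cocycle_eq_trace:
  assumes fX: "finite (asupp X)"
  shows "loop_cocycle N \<kappa> X Y = \<kappa> * loop_trace N (loop_mul N (loop_deriv X) Y)"
proof -
  have "loop_trace N (loop_mul N (loop_deriv X) Y)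
      = (\<Sum>a<N. \<Sum>m\<in>asupp X. \<Sum>c<N. loop_deriv X m a c * Y (0 - m) c a)"
    unfolding loop_trace_def mtr_def
    by (intro sum.cong refl loop_mul_eq_sum[OF fX asupp_loop_deriv])
  also have "\<dots> = (\<Sum>m\<in>asupp X. \<Sum>a<N. \<Sum>c<N. loop_deriv X m a c * Y (0 - m) c a)"
    by (rule sum.swap)
  finally show ?thesis
    by (simp add: loop_cocycle_def loop_deriv_def mtr_def mmul_def sum_distrib_left algebra_simps)
qed

lemma loop_mul_sum_left:
  assumes "finite J" "\<And>j. j \<in> J \<Longrightarrow> finite (asupp (X j))"
  shows "loop_mul N (\<lambda>k a b. \<Sum>j\<in>J. X j k a b) Y k a b = (\<Sum>j\<in>J. loop_mul N (X j) Y k a b)"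
proof -
  let ?S = "\<Union>j\<in>J. asupp (X j)"
  have fS: "finite ?S" using assms by auto
  have "asupp (\<lambda>k a b. \<Sum>j\<in>J. X j k a b) \<subseteq> ?S"
  proof
    fix m assume "m \<in> asupp (\<lambda>k a b. \<Sum>j\<in>J. X j k a b)"
    then obtain a b where "(\<Sum>j\<in>J. X j m a b) \<noteq> 0" by (auto simp: asupp_def fun_eq_iff)
    then obtain j where "j \<in> J" "X j m a b \<noteq> 0" by (meson sum.not_neutral_contains_not_neutral)
    then show "m \<in> ?S" by (auto intro: in_asuppI)
  qed
  then have "loop_mul N (\<lambda>k a b. \<Sum>j\<in>J. X j k a b) Y k a b
      = (\<Sum>m\<in>?S. \<Sum>c<N. \<Sum>j\<in>J. X j m a c * Y (k - m) c b)"
    by (simp add: loop_mul_eq_sum[OF fS] sum_distrib_right)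
  also have "\<dots> = (\<Sum>j\<in>J. \<Sum>m\<in>?S. \<Sum>c<N. X j m a c * Y (k - m) c b)"
    by (rule sum_swap_outer[symmetric])
  also have "\<dots> = (\<Sum>j\<in>J. loop_mul N (X j) Y k a b)"
    by (intro sum.cong refl loop_mul_eq_sum[symmetric, OF fS]) auto
  finally show ?thesis .
qed

lemma loop_mul_sum_right:
  "loop_mul N X (\<lambda>k a b. \<Sum>j\<in>J. Y j k a b) k a b = (\<Sum>j\<in>J. loop_mul N X (Y j) k a b)"
proof -
  have "loop_mul N X (\<lambda>k a b. \<Sum>j\<in>J. Y j k a b) k a b
      = (\<Sum>m\<in>asupp X. \<Sum>c<N. \<Sum>j\<in>J. X m a c * Y j (k - m) c b)"
    unfolding loop_mul_def mmul_def by (simp add: sum_distrib_left)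
  also have "\<dots> = (\<Sum>j\<in>J. \<Sum>m\<in>asupp X. \<Sum>c<N. X m a c * Y j (k - m) c b)"
    by (rule sum_swap_outer[symmetric])
  finally show ?thesis unfolding loop_mul_def mmul_def .
qed

lemma loop_trace_sum: "loop_trace N (\<lambda>k a b. \<Sum>j\<in>J. X j k a b) = (\<Sum>j\<in>J. loop_trace N (X j))"
  unfolding loop_trace_def mtr_def by (rule sum.swap)

definition loop_zero :: loop where
  "loop_zero = (\<lambda>k a b. 0)"

definition loop_add :: "loop \<Rightarrow> loop \<Rightarrow> loop" where
  "loop_add X Y = (\<lambda>k a b. X k a b + Y k a b)"

definition loop_diff :: "loop \<Rightarrow> loop \<Rightarrow> loop" where
  "loop_diff X Y = (\<lambda>k a b. X k a b - Y k a b)"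

definition loop_smul :: "complex \<Rightarrow> loop \<Rightarrow> loop" where
  "loop_smul c X = (\<lambda>k a b. c * X k a b)"

lemma finite_asupp_loop_diff:
  "finite (asupp X) \<Longrightarrow> finite (asupp Y) \<Longrightarrow> finite (asupp (loop_diff X Y))"
  by (rule finite_subset[of _ "asupp X \<union> asupp Y"]) (auto simp: asupp_def loop_diff_def)

lemma loop_bounded_diff:
  "loop_bounded N X \<Longrightarrow> loop_bounded N Y \<Longrightarrow> loop_bounded N (loop_diff X Y)"
  by (simp add: loop_bounded_def loop_diff_def)

lemma aff_add_eq: "aff_add (X, c) (Y, d) = (loop_add X Y, c + d)"
  by (simp add: aff_add_def loop_add_def madd_def fun_eq_iff)

lemma aff_smul_eq: "aff_smul a (X, c) = (loop_smul a X, a * c)"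
  by (simp add: aff_smul_def loop_smul_def fun_eq_iff)

lemma aff_br_zero_right: "aff_br N \<kappa> x (loop_zero, 0) = (loop_zero, 0)"
  by (simp add: aff_br_def loop_zero_def mbr_def msub_def mmul_def mtr_def fun_eq_iff)

lemma aff_br_eq:
  assumes fX: "finite (asupp X)" and fY: "finite (asupp Y)"
  shows "aff_br N \<kappa> (X, c) (Y, d)
    = (loop_diff (loop_mul N X Y) (loop_mul N Y X), loop_cocycle N \<kappa> X Y)"
proof -
  have "(\<Sum>m\<in>asupp X. mbr N (X m) (Y (k - m)) a b) = loop_mul N X Y k a b - loop_mul N Y X k a b"
    for k a b
  proof -
    have "(\<Sum>m\<in>asupp X. mbr N (X m) (Y (k - m)) a b)
        = (\<Sum>m\<in>asupp X. mmul N (X m) (Y (k - m)) a b) - (\<Sum>m\<in>asupp X. mmul N (Y (k - m)) (X m) a b)"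
      by (simp add: mbr_def msub_def sum_subtractf)
    also have "(\<Sum>m\<in>asupp X. mmul N (Y (k - m)) (X m) a b) = loop_mul N Y X k a b"
      by (rule loop_mul_swapped_sum) (simp_all add: fX fY)
    finally show ?thesis by (simp add: loop_mul_def)
  qed
  then show ?thesis by (simp add: aff_br_def loop_cocycle_def loop_diff_def fun_eq_iff)
qed

section \<open>Representing words by loop matrices\<close>

lemma sum_lessThan_add: "(\<Sum>j<r + s. f j) = (\<Sum>j<r. f j) + (\<Sum>j<s. f (j + r))"
  for r s :: nat
  by (induction s) (auto simp: add.commute add.left_commute)

text \<open>\<open>\<rho>\<close> represents the generators by loop matrices; \<open>\<gamma>\<close> prescribes the central charges of the
  one-letter words.\<close>
locale loop_rep =
  fixes N :: nat and \<kappa> :: complex and \<rho> :: "'g \<Rightarrow> loop" and \<gamma> :: "'g \<Rightarrow> complex"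
  assumes finite_asupp_rep: "finite (asupp (\<rho> g))"
    and loop_bounded_rep: "loop_bounded N (\<rho> g)"
begin

definition wprod :: "'g list \<Rightarrow> loop" where
  "wprod w = foldr (\<lambda>g X. loop_mul N (\<rho> g) X) w (loop_one N)"

lemma wprod_Nil [simp]: "wprod [] = loop_one N"
  by (simp add: wprod_def)

lemma wprod_Cons [simp]: "wprod (g # w) = loop_mul N (\<rho> g) (wprod w)"
  by (simp add: wprod_def)

lemma finite_asupp_wprod: "finite (asupp (wprod w))"
  by (induction w) (simp_all add: finite_subset[OF asupp_loop_one] finite_asupp_loop_mul finite_asupp_rep)

lemma loop_bounded_wprod: "loop_bounded N (wprod w)"
  by (induction w) (simp_all add: loop_bounded_one loop_bounded_mul loop_bounded_rep)

lemma wprod_append: "wprod (u @ v) = loop_mul N (wprod u) (wprod v)"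
  by (induction u)
     (simp_all add: loop_mul_one_left loop_bounded_wprod loop_mul_assoc finite_asupp_rep finite_asupp_wprod)

definition deriv_term :: "'g list \<Rightarrow> nat \<Rightarrow> loop" where
  "deriv_term w j =
     loop_mul N (loop_mul N (wprod (take j w)) (loop_deriv (\<rho> (w ! j)))) (wprod (drop (Suc j) w))"

lemma finite_asupp_deriv_term: "finite (asupp (deriv_term w j))"
  unfolding deriv_term_def
  by (intro finite_asupp_loop_mul finite_asupp_loop_deriv finite_asupp_wprod finite_asupp_rep)

lemma loop_deriv_wprod: "loop_deriv (wprod w) = (\<lambda>k a b. \<Sum>j<length w. deriv_term w j k a b)"
proof (induction w)
  case Nil
  then show ?case by (simp add: loop_deriv_def loop_one_def fun_eq_iff)
next
  case (Cons g w)
  have head: "loop_mul N (loop_deriv (\<rho> g)) (wprod w) = deriv_term (g # w) 0"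
    by (simp add: deriv_term_def loop_mul_one_left loop_bounded_deriv loop_bounded_rep
        loop_bounded_mul loop_bounded_wprod)
  have tail: "loop_mul N (\<rho> g) (deriv_term w j) = deriv_term (g # w) (Suc j)" for j
    by (simp add: deriv_term_def loop_mul_assoc finite_asupp_rep finite_asupp_wprod
        finite_asupp_loop_deriv finite_asupp_loop_mul)
  show ?case
  proof (intro ext)
    fix k a b
    have "loop_deriv (wprod (g # w)) k a b
        = loop_mul N (loop_deriv (\<rho> g)) (wprod w) k a b + loop_mul N (\<rho> g) (loop_deriv (wprod w)) k a b"
      by (simp add: loop_deriv_mul finite_asupp_rep)
    also have "\<dots> = deriv_term (g # w) 0 k a b + (\<Sum>j<length w. deriv_term (g # w) (Suc j) k a b)"
      by (simp add: Cons loop_mul_sum_right head tail)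
    also have "\<dots> = (\<Sum>j<length (g # w). deriv_term (g # w) j k a b)"
      by (simp only: length_Cons sum.lessThan_Suc_shift)
    finally show "loop_deriv (wprod (g # w)) k a b = (\<Sum>j<length (g # w). deriv_term (g # w) j k a b)" .
  qed
qed

definition deriv_trace :: "'g list \<Rightarrow> nat \<Rightarrow> complex" where
  "deriv_trace w j = loop_trace N (deriv_term w j)"

lemma sum_deriv_trace: "(\<Sum>j<length w. deriv_trace w j) = 0"
  using loop_trace_deriv[of N "wprod w"]
  by (simp add: loop_deriv_wprod loop_trace_sum deriv_trace_def)

lemma loop_cocycle_wprod:
  "loop_cocycle N \<kappa> (wprod u) (wprod v) = \<kappa> * (\<Sum>j<length u. deriv_trace (u @ v) j)"
proof -
  have extend: "loop_mul N (deriv_term u j) (wprod v) = deriv_term (u @ v) j" if "j < length u" for j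
    using that unfolding deriv_term_def
    by (simp add: nth_append wprod_append loop_mul_assoc finite_asupp_wprod finite_asupp_rep
        finite_asupp_loop_deriv finite_asupp_loop_mul)
  have "loop_mul N (\<lambda>k a b. \<Sum>j<length u. deriv_term u j k a b) (wprod v)
      = (\<lambda>k a b. \<Sum>j<length u. loop_mul N (deriv_term u j) (wprod v) k a b)"
    by (intro ext loop_mul_sum_left) (simp_all add: finite_asupp_deriv_term)
  then have "loop_cocycle N \<kappa> (wprod u) (wprod v)
      = \<kappa> * loop_trace N (\<lambda>k a b. \<Sum>j<length u. loop_mul N (deriv_term u j) (wprod v) k a b)"
    by (simp add: loop_cocycle_eq_trace finite_asupp_wprod loop_deriv_wprod)
  then show ?thesis
    by (simp add: loop_trace_sum deriv_trace_def extend)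
qed

lemma deriv_trace_rotate:
  assumes "j < length y"
  shows "deriv_trace (x @ y) (j + length x) = deriv_trace (y @ x) j"
proof -
  let ?A = "loop_mul N (wprod (take j y)) (loop_deriv (\<rho> (y ! j)))" and ?B = "wprod (drop (Suc j) y)"
  have fA: "finite (asupp ?A)"
    by (intro finite_asupp_loop_mul finite_asupp_wprod finite_asupp_loop_deriv finite_asupp_rep)
  have "deriv_term (x @ y) (j + length x) = loop_mul N (wprod x) (loop_mul N ?A ?B)"
    by (simp add: deriv_term_def nth_append wprod_append loop_mul_assoc finite_asupp_wprod
        finite_asupp_loop_deriv finite_asupp_rep fA)
  moreover have "deriv_term (y @ x) j = loop_mul N (loop_mul N ?A ?B) (wprod x)"
    using assms
    by (simp add: deriv_term_def nth_append wprod_append loop_mul_assoc finite_asupp_wprod fA)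
  ultimately show ?thesis
    unfolding deriv_trace_def
    by (simp add: loop_trace_mul_commute finite_asupp_wprod fA finite_asupp_loop_mul)
qed

text \<open>The traces \<open>deriv_trace w j\<close> sum to zero and are permuted cyclically when \<open>w\<close> is rotated,
  so weighting them by their position and dividing by the length turns a rotation into the cocycle:
  this is the primitive required by \<open>potential_append_commute\<close>.\<close>
definition potential :: "'g list \<Rightarrow> complex" where
  "potential w = (if length w = 0 then 0 else if length w = 1 then \<gamma> (hd w)
     else - (\<kappa> / of_nat (length w)) * (\<Sum>j<length w. of_nat j * deriv_trace w j))"

lemma potential_append_commute_nonempty:
  assumes "u \<noteq> []" and "v \<noteq> []"
  shows "potential (u @ v) - potential (v @ u) = loop_cocycle N \<kappa> (wprod u) (wprod v)"
proof -
  define r s where "r = length u" and "s = length v"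
  define A where "A j = deriv_trace (u @ v) j" for j
  have rs: "r \<ge> 1" "s \<ge> 1" using assms by (auto simp: r_def s_def Suc_le_eq)
  let ?a = "\<Sum>i<r. A i" and ?b = "\<Sum>j<s. A (j + r)"
  let ?x1 = "\<Sum>i<r. of_nat i * A i" and ?x2 = "\<Sum>j<s. of_nat j * A (j + r)"
  have zero: "?a + ?b = 0"
    using sum_deriv_trace[of "u @ v"] by (simp add: r_def s_def A_def sum_lessThan_add)
  have S1: "(\<Sum>j<length (u @ v). of_nat j * deriv_trace (u @ v) j) = ?x1 + ?x2 + of_nat r * ?b"
    by (simp add: r_def s_def A_def sum_lessThan_add algebra_simps sum.distrib sum_distrib_left)
  have rot1: "deriv_trace (v @ u) j = A (j + r)" if "j < s" for j
    using deriv_trace_rotate[of j v u] that by (simp add: A_def r_def s_def)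
  have rot2: "deriv_trace (v @ u) (i + s) = A i" if "i < r" for i
    using deriv_trace_rotate[of i u v] that by (simp add: A_def r_def s_def)
  have "(\<Sum>j<length (v @ u). of_nat j * deriv_trace (v @ u) j)
      = (\<Sum>j<s. of_nat j * deriv_trace (v @ u) j) + (\<Sum>i<r. of_nat (i + s) * deriv_trace (v @ u) (i + s))"
    by (simp add: r_def s_def sum_lessThan_add)
  also have "\<dots> = ?x2 + (\<Sum>i<r. of_nat (i + s) * A i)"
    using rot1 rot2 by simp
  also have "\<dots> = ?x2 + ?x1 + of_nat s * ?a"
    by (simp add: algebra_simps sum.distrib sum_distrib_left)
  finally have S2: "(\<Sum>j<length (v @ u). of_nat j * deriv_trace (v @ u) j) = ?x2 + ?x1 + of_nat s * ?a" .
  have len: "length (u @ v) = r + s" "length (v @ u) = r + s" by (simp_all add: r_def s_def)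
  have ge2: "\<not> r + s = 0" "\<not> r + s = 1" using rs by auto
  have "potential (u @ v) - potential (v @ u)
      = - (\<kappa> / of_nat (r + s)) * ((?x1 + ?x2 + of_nat r * ?b) - (?x2 + ?x1 + of_nat s * ?a))"
    unfolding potential_def len S1[unfolded len] S2[unfolded len] using ge2 by (simp add: algebra_simps)
  also have "\<dots> = - (\<kappa> / of_nat (r + s)) * (- (of_nat (r + s)) * ?a)"
    using zero by (simp add: algebra_simps eq_neg_iff_add_eq_0[symmetric])
  also have "\<dots> = \<kappa> * ?a"
  proof -
    have "(of_nat (r + s) :: complex) \<noteq> 0" using ge2 by (simp only: of_nat_eq_0_iff) simp
    then show ?thesis by (simp only: divide_inverse) (simp add: field_simps)
  qed
  also have "\<dots> = loop_cocycle N \<kappa> (wprod u) (wprod v)"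
    by (simp add: loop_cocycle_wprod A_def r_def)
  finally show ?thesis .
qed

lemma potential_append_commute:
  "potential (u @ v) - potential (v @ u) = loop_cocycle N \<kappa> (wprod u) (wprod v)"
proof (cases "u = [] \<or> v = []")
  case True
  have "loop_cocycle N \<kappa> (loop_one N) Y = 0" for Y
    by (subst loop_cocycle_eq_sum[of "{0}"]) (simp_all add: asupp_loop_one)
  moreover have "loop_cocycle N \<kappa> (wprod u) (loop_one N) = 0"
    by (simp add: loop_cocycle_eq_trace finite_asupp_wprod loop_mul_one_right
        finite_asupp_loop_deriv loop_bounded_deriv loop_bounded_wprod loop_trace_deriv)
  ultimately show ?thesis using True by auto
next
  case False
  then show ?thesis by (auto intro: potential_append_commute_nonempty)
qed

definition rep_loop :: "'g fa \<Rightarrow> loop" where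
  "rep_loop p = (\<lambda>k a b. fa_lin p (\<lambda>w. wprod w k a b))"

definition rep :: "'g fa \<Rightarrow> aff" where
  "rep p = (rep_loop p, fa_lin p potential)"

lemma asupp_rep_loop: "asupp (rep_loop x) \<subseteq> (\<Union>u\<in>fa_supp x. asupp (wprod u))"
proof
  fix m assume "m \<in> asupp (rep_loop x)"
  then obtain a b where "rep_loop x m a b \<noteq> 0" by (auto simp: asupp_def fun_eq_iff)
  then have "(\<Sum>u\<in>fa_supp x. x u * wprod u m a b) \<noteq> 0" by (simp add: rep_loop_def fa_lin_def)
  then obtain u where "u \<in> fa_supp x" "x u * wprod u m a b \<noteq> 0"
    by (meson sum.not_neutral_contains_not_neutral)
  then show "m \<in> (\<Union>u\<in>fa_supp x. asupp (wprod u))" by (auto intro: in_asuppI)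
qed

lemma finite_asupp_rep_loop: "finite (fa_supp x) \<Longrightarrow> finite (asupp (rep_loop x))"
  by (rule finite_subset[OF asupp_rep_loop]) (simp add: finite_asupp_wprod)

lemma loop_mul_rep_loop:
  assumes fx: "finite (fa_supp x)"
  shows "loop_mul N (rep_loop x) (rep_loop y) k a b
    = (\<Sum>u\<in>fa_supp x. \<Sum>v\<in>fa_supp y. x u * y v * loop_mul N (wprod u) (wprod v) k a b)"
proof -
  let ?S = "\<Union>u\<in>fa_supp x. asupp (wprod u)"
  have fS: "finite ?S" using fx by (simp add: finite_asupp_wprod)
  have "loop_mul N (rep_loop x) (rep_loop y) k a b
      = (\<Sum>m\<in>?S. \<Sum>c<N. rep_loop x m a c * rep_loop y (k - m) c b)"
    by (rule loop_mul_eq_sum[OF fS asupp_rep_loop])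
  also have "\<dots> = (\<Sum>m\<in>?S. \<Sum>c<N. \<Sum>u\<in>fa_supp x. \<Sum>v\<in>fa_supp y.
      x u * y v * (wprod u m a c * wprod v (k - m) c b))"
    by (simp add: rep_loop_def fa_lin_def sum_product algebra_simps)
  also have "\<dots> = (\<Sum>u\<in>fa_supp x. \<Sum>v\<in>fa_supp y. \<Sum>m\<in>?S. \<Sum>c<N.
      x u * y v * (wprod u m a c * wprod v (k - m) c b))"
    by (rule sum_swap_pairs)
  also have "\<dots> = (\<Sum>u\<in>fa_supp x. \<Sum>v\<in>fa_supp y. x u * y v * loop_mul N (wprod u) (wprod v) k a b)"
  proof (intro sum.cong refl)
    fix u v assume "u \<in> fa_supp x"
    then have "loop_mul N (wprod u) (wprod v) k a b = (\<Sum>m\<in>?S. \<Sum>c<N. wprod u m a c * wprod v (k - m) c b)"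
      by (intro loop_mul_eq_sum[OF fS]) auto
    then show "(\<Sum>m\<in>?S. \<Sum>c<N. x u * y v * (wprod u m a c * wprod v (k - m) c b))
        = x u * y v * loop_mul N (wprod u) (wprod v) k a b"
      by (simp add: sum_distrib_left)
  qed
  finally show ?thesis .
qed

lemma loop_cocycle_rep_loop:
  assumes fx: "finite (fa_supp x)"
  shows "loop_cocycle N \<kappa> (rep_loop x) (rep_loop y)
    = (\<Sum>u\<in>fa_supp x. \<Sum>v\<in>fa_supp y. x u * y v * loop_cocycle N \<kappa> (wprod u) (wprod v))"
proof -
  let ?S = "\<Union>u\<in>fa_supp x. asupp (wprod u)"
  let ?t = "\<lambda>u v m a c. x u * y v * (of_int m * \<kappa> * (wprod u m a c * wprod v (- m) c a))"
  have fS: "finite ?S" using fx by (simp add: finite_asupp_wprod)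
  have "loop_cocycle N \<kappa> (rep_loop x) (rep_loop y)
      = (\<Sum>m\<in>?S. of_int m * \<kappa> * mtr N (mmul N (rep_loop x m) (rep_loop y (- m))))"
    by (rule loop_cocycle_eq_sum[OF fS asupp_rep_loop])
  also have "\<dots> = (\<Sum>m\<in>?S. \<Sum>a<N. \<Sum>c<N. \<Sum>v\<in>fa_supp y. \<Sum>u\<in>fa_supp x. ?t u v m a c)"
    by (simp add: rep_loop_def fa_lin_def sum_product algebra_simps mtr_def mmul_def sum_distrib_left)
  also have "\<dots> = (\<Sum>m\<in>?S. \<Sum>a<N. \<Sum>c<N. \<Sum>u\<in>fa_supp x. \<Sum>v\<in>fa_supp y. ?t u v m a c)"
    by (intro sum.cong refl sum.swap)
  also have "\<dots> = (\<Sum>m\<in>?S. \<Sum>u\<in>fa_supp x. \<Sum>v\<in>fa_supp y. \<Sum>a<N. \<Sum>c<N. ?t u v m a c)"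
    by (intro sum.cong refl sum_swap_pairs)
  also have "\<dots> = (\<Sum>u\<in>fa_supp x. \<Sum>v\<in>fa_supp y. \<Sum>m\<in>?S. \<Sum>a<N. \<Sum>c<N. ?t u v m a c)"
    by (rule sum_swap_outer)
  also have "\<dots> = (\<Sum>u\<in>fa_supp x. \<Sum>v\<in>fa_supp y. x u * y v * loop_cocycle N \<kappa> (wprod u) (wprod v))"
  proof (intro sum.cong refl)
    fix u v assume "u \<in> fa_supp x"
    then have "loop_cocycle N \<kappa> (wprod u) (wprod v)
        = (\<Sum>m\<in>?S. of_int m * \<kappa> * mtr N (mmul N (wprod u m) (wprod v (- m))))"
      by (intro loop_cocycle_eq_sum[OF fS]) auto
    then show "(\<Sum>m\<in>?S. \<Sum>a<N. \<Sum>c<N. ?t u v m a c) = x u * y v * loop_cocycle N \<kappa> (wprod u) (wprod v)"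
      by (simp add: sum_distrib_left mtr_def mmul_def)
  qed
  finally show ?thesis .
qed

text \<open>Because \<open>wprod\<close> is multiplicative and \<open>potential\<close> is a primitive of the cocycle,
  \<open>rep\<close> is a Lie algebra homomorphism on the commutator Lie algebra of the whole free algebra.\<close>
lemma rep_comm:
  assumes fx: "finite (fa_supp x)" and fy: "finite (fa_supp y)"
  shows "rep (fa_comm x y) = aff_br N \<kappa> (rep x) (rep y)"
proof -
  have fxy: "finite (fa_supp (fa_mul x y))" "finite (fa_supp (fa_mul y x))"
    using fx fy by (simp_all add: finite_fa_supp_mul)
  have mul: "fa_lin (fa_mul x y) (\<lambda>w. wprod w k a b) = loop_mul N (rep_loop x) (rep_loop y) k a b"
    if "finite (fa_supp x)" "finite (fa_supp y)" for x y k a b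
    using that by (simp add: fa_lin_mul loop_mul_rep_loop wprod_append)
  have "fa_lin (fa_mul x y) potential - fa_lin (fa_mul y x) potential
      = (\<Sum>u\<in>fa_supp x. \<Sum>v\<in>fa_supp y. x u * y v * potential (u @ v))
        - (\<Sum>v\<in>fa_supp y. \<Sum>u\<in>fa_supp x. y v * x u * potential (v @ u))"
    by (simp add: fa_lin_mul fx fy)
  also have "\<dots> = (\<Sum>u\<in>fa_supp x. \<Sum>v\<in>fa_supp y. x u * y v * (potential (u @ v) - potential (v @ u)))"
    by (subst (2) sum.swap) (simp add: mult.commute right_diff_distrib sum_subtractf)
  also have "\<dots> = loop_cocycle N \<kappa> (rep_loop x) (rep_loop y)"
    by (simp add: potential_append_commute loop_cocycle_rep_loop fx)
  finally show ?thesis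
    by (simp add: rep_def aff_br_eq finite_asupp_rep_loop fx fy fa_comm_def fa_lin_sub fxy mul)
       (simp add: rep_loop_def loop_diff_def fa_comm_def fa_lin_sub fxy mul fx fy fun_eq_iff)
qed

lemma rep_add:
  "finite (fa_supp x) \<Longrightarrow> finite (fa_supp y) \<Longrightarrow> rep (fa_add x y) = aff_add (rep x) (rep y)"
  by (simp add: rep_def aff_add_def rep_loop_def fa_lin_add madd_def fun_eq_iff)

lemma rep_smul: "finite (fa_supp x) \<Longrightarrow> rep (fa_smul c x) = aff_smul c (rep x)"
  by (simp add: rep_def aff_smul_def rep_loop_def fa_lin_smul fun_eq_iff)

lemma rep_zero: "rep fa_zero = ((\<lambda>m a b. 0), 0)"
  by (simp add: rep_def rep_loop_def fa_lin_zero)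

lemma rep_gen: "rep (fa_gen g) = (\<rho> g, \<gamma> g)"
  by (simp add: rep_def rep_loop_def fa_lin_gen potential_def loop_mul_one_right finite_asupp_rep
      loop_bounded_rep)

end

lemma FA_finite_supp: "p \<in> FA S \<Longrightarrow> finite (fa_supp p)"
  by (simp add: FA_def fa_supp_def)

lemma FA_add: "p \<in> FA S \<Longrightarrow> q \<in> FA S \<Longrightarrow> fa_add p q \<in> FA S"
  unfolding FA_def fa_add_def
  by (auto intro: finite_subset[of _ "{w. p w \<noteq> 0} \<union> {w. q w \<noteq> 0}"]) (metis add_0 subsetD)

lemma FA_smul: "p \<in> FA S \<Longrightarrow> fa_smul a p \<in> FA S"
  unfolding FA_def fa_smul_def by (auto intro: finite_subset[of _ "{w. p w \<noteq> 0}"])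

lemma FA_mul:
  assumes "p \<in> FA S" "q \<in> FA S"
  shows "fa_mul p q \<in> FA S"
proof -
  have "set w \<subseteq> S" if "w \<in> fa_supp (fa_mul p q)" for w
  proof -
    have "w \<in> (\<lambda>(u, v). u @ v) ` (fa_supp p \<times> fa_supp q)"
      using that fa_supp_mul by blast
    then obtain u v where "u \<in> fa_supp p" "v \<in> fa_supp q" "w = u @ v" by auto
    then show ?thesis using assms by (auto simp: FA_def fa_supp_def)
  qed
  then show ?thesis
    using assms finite_fa_supp_mul[OF FA_finite_supp FA_finite_supp] by (simp add: FA_def fa_supp_def)
qed

lemma FA_sub: "p \<in> FA S \<Longrightarrow> q \<in> FA S \<Longrightarrow> fa_sub p q \<in> FA S"
  unfolding FA_def fa_sub_def
  by (auto intro: finite_subset[of _ "{w. p w \<noteq> 0} \<union> {w. q w \<noteq> 0}"]) (metis subsetD)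

lemma FA_comm: "p \<in> FA S \<Longrightarrow> q \<in> FA S \<Longrightarrow> fa_comm p q \<in> FA S"
  by (simp add: fa_comm_def FA_sub FA_mul)

lemma FA_gen: "g \<in> S \<Longrightarrow> fa_gen g \<in> FA S"
  by (simp add: FA_def fa_gen_def)

lemma FA_zero: "fa_zero \<in> FA S"
  by (simp add: FA_def fa_zero_def)

lemma fa_lie_span_FA: "x \<in> fa_lie_span (fa_gen ` S) \<Longrightarrow> x \<in> FA S"
  by (induction rule: fa_lie_span.induct) (auto intro: FA_add FA_smul FA_comm FA_gen)

lemma fa_lie_span_finite_supp: "x \<in> fa_lie_span (fa_gen ` S) \<Longrightarrow> finite (fa_supp x)"
  by (rule FA_finite_supp[OF fa_lie_span_FA])

lemma fa_sub_eq_add_smul: "fa_sub x y = fa_add x (fa_smul (-1) y)"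
  by (simp add: fa_sub_def fa_add_def fa_smul_def fun_eq_iff)

lemma fa_lie_span_sub:
  "x \<in> fa_lie_span S \<Longrightarrow> y \<in> fa_lie_span S \<Longrightarrow> fa_sub x y \<in> fa_lie_span S"
  by (simp add: fa_sub_eq_add_smul fa_lie_span.add fa_lie_span.smul)

lemma fa_lie_span_ad_pow:
  "x \<in> fa_lie_span S \<Longrightarrow> y \<in> fa_lie_span S \<Longrightarrow> fa_ad_pow k x y \<in> fa_lie_span S"
  by (induction k) (auto simp: fa_ad_pow_def intro: fa_lie_span.comm)

lemma fa_ideal_sub: "x \<in> fa_ideal A R \<Longrightarrow> y \<in> fa_ideal A R \<Longrightarrow> fa_sub x y \<in> fa_ideal A R"
  by (simp add: fa_sub_eq_add_smul fa_ideal.add fa_ideal.smul)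

lemma fa_ideal_sub_self: "fa_sub x x \<in> fa_ideal A R"
proof -
  have "fa_sub x x = fa_zero" by (simp add: fa_sub_def fa_zero_def fun_eq_iff)
  then show ?thesis by (simp add: fa_ideal.zero)
qed

text \<open>The algebra homomorphism of free algebras induced by a map \<open>\<sigma>\<close> of generators.\<close>
definition fa_map :: "('g \<Rightarrow> 'h) \<Rightarrow> 'g fa \<Rightarrow> 'h fa" where
  "fa_map \<sigma> p = (\<lambda>v. fa_lin p (\<lambda>w. if map \<sigma> w = v then 1 else 0))"

lemma fa_map_add:
  "finite (fa_supp p) \<Longrightarrow> finite (fa_supp q) \<Longrightarrow> fa_map \<sigma> (fa_add p q) = fa_add (fa_map \<sigma> p) (fa_map \<sigma> q)"
  by (simp add: fa_map_def fa_lin_add fun_eq_iff) (simp add: fa_add_def)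

lemma fa_map_sub:
  "finite (fa_supp p) \<Longrightarrow> finite (fa_supp q) \<Longrightarrow> fa_map \<sigma> (fa_sub p q) = fa_sub (fa_map \<sigma> p) (fa_map \<sigma> q)"
  by (simp add: fa_map_def fa_lin_sub fun_eq_iff) (simp add: fa_sub_def)

lemma fa_map_smul: "finite (fa_supp p) \<Longrightarrow> fa_map \<sigma> (fa_smul c p) = fa_smul c (fa_map \<sigma> p)"
  by (simp add: fa_map_def fa_lin_smul fun_eq_iff) (simp add: fa_smul_def)

lemma fa_map_zero: "fa_map \<sigma> fa_zero = fa_zero"
  by (simp add: fa_map_def fa_lin_zero) (simp add: fa_zero_def)

lemma fa_map_one: "fa_map \<sigma> fa_one = fa_one"
  unfolding fa_map_def fa_lin_one by (auto simp: fa_one_def fun_eq_iff)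

lemma fa_map_gen: "fa_map \<sigma> (fa_gen g) = fa_gen (\<sigma> g)"
  unfolding fa_map_def fa_lin_gen by (auto simp: fa_gen_def fun_eq_iff)

lemma fa_map_mul:
  assumes fp: "finite (fa_supp p)" and fq: "finite (fa_supp q)"
  shows "fa_map \<sigma> (fa_mul p q) = fa_mul (fa_map \<sigma> p) (fa_map \<sigma> q)"
proof (rule ext)
  fix v
  let ?s = "map \<sigma>"
  have "fa_map \<sigma> (fa_mul p q) v
      = (\<Sum>u\<in>fa_supp p. \<Sum>u'\<in>fa_supp q. p u * q u' * (if ?s u @ ?s u' = v then 1 else 0))"
    by (simp add: fa_map_def fa_lin_mul fp fq)
  also have "\<dots> = (\<Sum>u\<in>fa_supp p. \<Sum>u'\<in>fa_supp q. \<Sum>k\<le>length v.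
      if take k v = ?s u \<and> drop k v = ?s u' then p u * q u' else 0)"
    by (intro sum.cong refl) (subst sum_splittings_delta, auto)
  also have "\<dots> = (\<Sum>k\<le>length v. \<Sum>u\<in>fa_supp p. \<Sum>u'\<in>fa_supp q.
      p u * (if ?s u = take k v then 1 else 0) * (q u' * (if ?s u' = drop k v then 1 else 0)))"
    by (subst sum_swap_outer[symmetric]) (intro sum.cong refl, auto)
  also have "\<dots> = fa_mul (fa_map \<sigma> p) (fa_map \<sigma> q) v"
    unfolding fa_mul_def fa_map_def fa_lin_def by (simp add: sum_product)
  finally show "fa_map \<sigma> (fa_mul p q) v = fa_mul (fa_map \<sigma> p) (fa_map \<sigma> q) v" .
qed

lemma fa_map_comm:
  "finite (fa_supp p) \<Longrightarrow> finite (fa_supp q) \<Longrightarrow> fa_map \<sigma> (fa_comm p q) = fa_comm (fa_map \<sigma> p) (fa_map \<sigma> q)"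
  unfolding fa_comm_def by (simp add: fa_map_sub finite_fa_supp_mul fa_map_mul)

lemma fa_comm_sub_expand:
  "fa_sub (fa_comm a b) c
    = fa_add (fa_add (fa_add (fa_mul x (fa_sub b y)) (fa_mul (fa_sub a x) b))
        (fa_smul (-1) (fa_add (fa_mul y (fa_sub a x)) (fa_mul (fa_sub b y) a))))
        (fa_sub (fa_comm x y) c)"
  by (simp add: fa_comm_def fa_mul_def fa_sub_def fa_add_def fa_smul_def fun_eq_iff algebra_simps
      sum.distrib sum_subtractf sum_distrib_left sum_negf)

lemma FA_fa_map:
  assumes p: "p \<in> FA S" and \<sigma>: "\<sigma> ` S \<subseteq> T"
  shows "fa_map \<sigma> p \<in> FA T"
proof -
  have preimage: "\<exists>w\<in>fa_supp p. map \<sigma> w = v" if "fa_map \<sigma> p v \<noteq> 0" for v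
    using that unfolding fa_map_def fa_lin_def by (auto intro: ccontr)
  have "finite {v. fa_map \<sigma> p v \<noteq> 0}"
    by (rule finite_subset[of _ "map \<sigma> ` fa_supp p"]) (use preimage FA_finite_supp[OF p] in auto)
  moreover have "set v \<subseteq> T" if nz: "fa_map \<sigma> p v \<noteq> 0" for v
  proof -
    obtain w where "w \<in> fa_supp p" "map \<sigma> w = v" using preimage[OF nz] by blast
    then show ?thesis using p \<sigma> by (force simp: FA_def fa_supp_def)
  qed
  ultimately show ?thesis by (simp add: FA_def)
qed

lemma gens_in_gim_gens:
  "1 \<le> i \<Longrightarrow> i \<le> n \<Longrightarrow> GE i \<in> gim_gens n \<and> GF i \<in> gim_gens n \<and> GH i \<in> gim_gens n"
  by (auto simp: gim_gens_def)

lemma fa_gen_in_gim_FL: "g \<in> gim_gens n \<Longrightarrow> fa_gen g \<in> gim_FL n"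
  by (simp add: gim_FL_def fa_lie_span.gen)

lemma gim_FL_subset_FA: "x \<in> gim_FL n \<Longrightarrow> x \<in> FA (gim_gens n)"
  by (simp add: gim_FL_def fa_lie_span_FA)

lemma gim_rels_subset_FL: "r \<in> gim_rels n \<Longrightarrow> r \<in> gim_FL n"
proof -
  have gens: "ge i \<in> gim_FL n" "gf i \<in> gim_FL n" "gh i \<in> gim_FL n" if "i \<in> {1..n}" for i
    using that gens_in_gim_gens[of i n] by (auto intro: fa_gen_in_gim_FL)
  have closed:
    "x \<in> gim_FL n \<Longrightarrow> y \<in> gim_FL n \<Longrightarrow> fa_comm x y \<in> gim_FL n"
    "x \<in> gim_FL n \<Longrightarrow> y \<in> gim_FL n \<Longrightarrow> fa_sub x y \<in> gim_FL n"
    "x \<in> gim_FL n \<Longrightarrow> y \<in> gim_FL n \<Longrightarrow> fa_add x y \<in> gim_FL n"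
    "x \<in> gim_FL n \<Longrightarrow> fa_smul c x \<in> gim_FL n"
    "x \<in> gim_FL n \<Longrightarrow> y \<in> gim_FL n \<Longrightarrow> fa_ad_pow k x y \<in> gim_FL n" for x y c k
    by (simp_all add: gim_FL_def fa_lie_span.comm fa_lie_span_sub fa_lie_span.add fa_lie_span.smul
        fa_lie_span_ad_pow)
  assume "r \<in> gim_rels n"
  then show ?thesis unfolding gim_rels_def by (auto intro!: closed gens)
qed

lemma gim_I_subset_FL:
  assumes "x \<in> gim_I n" "n \<ge> 1"
  shows "x \<in> gim_FL n"
  using assms(1) unfolding gim_I_def
proof (induction rule: fa_lie_ideal.induct)
  case (gen r)
  then show ?case by (rule gim_rels_subset_FL)
next
  case zero
  have "fa_smul 0 (ge 1) \<in> gim_FL n"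
    using assms(2) gens_in_gim_gens[of 1 n] by (simp add: gim_FL_def fa_lie_span.gen fa_lie_span.smul)
  then show ?case by (simp add: fa_smul_def fa_zero_def)
qed (auto simp: gim_FL_def intro: fa_lie_span.add fa_lie_span.smul fa_lie_span.comm)

lemma gim_J_subset_FA: "x \<in> gim_J n \<Longrightarrow> x \<in> FA (gim_gens n)"
  unfolding gim_J_def
  by (induction rule: fa_ideal.induct)
     (auto intro: gim_FL_subset_FA gim_rels_subset_FL FA_zero FA_add FA_smul FA_mul)

text \<open>Out-of-range indices are sent to zero, so that every generator gets a loop matrix with
  entries in \<open>{0..<2n}\<close>, as \<open>loop_rep\<close> requires.\<close>
definition loop_e :: "nat \<Rightarrow> nat \<Rightarrow> loop" where
  "loop_e n i = (if 1 \<le> i \<and> i \<le> n then fst (hat_e n i) else loop_zero)"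

definition loop_f :: "nat \<Rightarrow> nat \<Rightarrow> loop" where
  "loop_f n i = (if 1 \<le> i \<and> i \<le> n then fst (hat_f n i) else loop_zero)"

definition gim_loop :: "nat \<Rightarrow> gimgen \<Rightarrow> loop" where
  "gim_loop n g = (case g of GE i \<Rightarrow> loop_e n i | GF i \<Rightarrow> loop_f n i
     | GH i \<Rightarrow> loop_diff (loop_mul (2*n) (loop_e n i) (loop_f n i)) (loop_mul (2*n) (loop_f n i) (loop_e n i)))"

definition gim_central :: "nat \<Rightarrow> complex \<Rightarrow> gimgen \<Rightarrow> complex" where
  "gim_central n \<kappa> g = (case g of GH i \<Rightarrow> loop_cocycle (2*n) \<kappa> (loop_e n i) (loop_f n i) | _ \<Rightarrow> 0)"

lemma finite_asupp_loop_e: "finite (asupp (loop_e n i))"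
  by (rule finite_subset[of _ "{-1, 0}"])
     (auto simp: loop_e_def loop_zero_def hat_e_def aff_add_def aff_single_def madd_def msub_def
        asupp_def fun_eq_iff)

lemma finite_asupp_loop_f: "finite (asupp (loop_f n i))"
  by (rule finite_subset[of _ "{0, 1}"])
     (auto simp: loop_f_def loop_zero_def hat_f_def aff_add_def aff_single_def madd_def msub_def
        asupp_def fun_eq_iff)

lemma loop_bounded_loop_e: "loop_bounded (2*n) (loop_e n i)"
  by (auto simp: loop_bounded_def loop_e_def loop_zero_def hat_e_def aff_add_def aff_single_def
      madd_def msub_def munit_def Epos_def Eneg_def)

lemma loop_bounded_loop_f: "loop_bounded (2*n) (loop_f n i)"
  by (auto simp: loop_bounded_def loop_f_def loop_zero_def hat_f_def aff_add_def aff_single_def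
      madd_def msub_def munit_def Epos_def Eneg_def)

lemma loop_rep_gim: "loop_rep (2*n) (gim_loop n)"
proof
  fix g
  show "finite (asupp (gim_loop n g))"
    by (cases g) (simp_all add: gim_loop_def finite_asupp_loop_e finite_asupp_loop_f
        finite_asupp_loop_mul finite_asupp_loop_diff)
  show "loop_bounded (2*n) (gim_loop n g)"
    by (cases g) (simp_all add: gim_loop_def loop_bounded_loop_e loop_bounded_loop_f
        loop_bounded_mul loop_bounded_diff)
qed

definition gim_to_aff :: "nat \<Rightarrow> complex \<Rightarrow> gimgen fa \<Rightarrow> aff" where
  "gim_to_aff n \<kappa> = loop_rep.rep (2*n) \<kappa> (gim_loop n) (gim_central n \<kappa>)"

lemma gim_to_aff_add:
  "finite (fa_supp x) \<Longrightarrow> finite (fa_supp y) \<Longrightarrow>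
    gim_to_aff n \<kappa> (fa_add x y) = aff_add (gim_to_aff n \<kappa> x) (gim_to_aff n \<kappa> y)"
  unfolding gim_to_aff_def by (rule loop_rep.rep_add[OF loop_rep_gim])

lemma gim_to_aff_smul:
  "finite (fa_supp x) \<Longrightarrow> gim_to_aff n \<kappa> (fa_smul c x) = aff_smul c (gim_to_aff n \<kappa> x)"
  unfolding gim_to_aff_def by (rule loop_rep.rep_smul[OF loop_rep_gim])

lemma gim_to_aff_comm:
  "finite (fa_supp x) \<Longrightarrow> finite (fa_supp y) \<Longrightarrow>
    gim_to_aff n \<kappa> (fa_comm x y) = aff_br (2*n) \<kappa> (gim_to_aff n \<kappa> x) (gim_to_aff n \<kappa> y)"
  unfolding gim_to_aff_def by (rule loop_rep.rep_comm[OF loop_rep_gim])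

lemma gim_to_aff_zero: "gim_to_aff n \<kappa> fa_zero = ((\<lambda>m a b. 0), 0)"
  unfolding gim_to_aff_def by (rule loop_rep.rep_zero[OF loop_rep_gim])

lemma gim_to_aff_sub:
  "finite (fa_supp x) \<Longrightarrow> finite (fa_supp y) \<Longrightarrow>
    gim_to_aff n \<kappa> (fa_sub x y) = aff_add (gim_to_aff n \<kappa> x) (aff_smul (-1) (gim_to_aff n \<kappa> y))"
  by (simp add: fa_sub_eq_add_smul gim_to_aff_add gim_to_aff_smul finite_fa_supp_smul)

lemma gim_to_aff_ad_pow:
  assumes "finite (fa_supp x)" "finite (fa_supp y)"
  shows "gim_to_aff n \<kappa> (fa_ad_pow k x y) = ((aff_br (2*n) \<kappa> (gim_to_aff n \<kappa> x)) ^^ k) (gim_to_aff n \<kappa> y)"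
proof (induction k)
  case 0
  then show ?case by (simp add: fa_ad_pow_def)
next
  case (Suc k)
  have "finite (fa_supp (fa_ad_pow k x y))"
    unfolding fa_ad_pow_def by (induction k) (simp_all add: assms finite_fa_supp_comm)
  then show ?case using Suc assms by (simp add: fa_ad_pow_def gim_to_aff_comm)
qed

lemma gim_to_aff_gen: "gim_to_aff n \<kappa> (fa_gen g) = (gim_loop n g, gim_central n \<kappa> g)"
  unfolding gim_to_aff_def by (rule loop_rep.rep_gen[OF loop_rep_gim])

lemma hat_e_eq: "i \<in> {1..n} \<Longrightarrow> hat_e n i = (loop_e n i, 0)"
  by (simp add: loop_e_def prod_eq_iff hat_e_def aff_add_def aff_single_def)

lemma hat_f_eq: "i \<in> {1..n} \<Longrightarrow> hat_f n i = (loop_f n i, 0)"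
  by (simp add: loop_f_def prod_eq_iff hat_f_def aff_add_def aff_single_def)

lemma gim_to_aff_GE: "i \<in> {1..n} \<Longrightarrow> gim_to_aff n \<kappa> (ge i) = hat_e n i"
  by (simp add: gim_to_aff_gen gim_loop_def gim_central_def hat_e_eq)

lemma gim_to_aff_GF: "i \<in> {1..n} \<Longrightarrow> gim_to_aff n \<kappa> (gf i) = hat_f n i"
  by (simp add: gim_to_aff_gen gim_loop_def gim_central_def hat_f_eq)

lemma gim_to_aff_GH: "i \<in> {1..n} \<Longrightarrow> gim_to_aff n \<kappa> (gh i) = aff_br (2*n) \<kappa> (hat_e n i) (hat_f n i)"
  by (simp add: gim_to_aff_gen gim_loop_def gim_central_def hat_e_eq hat_f_eq aff_br_eq
      finite_asupp_loop_e finite_asupp_loop_f)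

lemma gim_to_aff_g_fp:
  assumes "x \<in> gim_FL n"
  shows "gim_to_aff n \<kappa> x \<in> g_fp n \<kappa>"
  using assms unfolding gim_FL_def
proof (induction rule: fa_lie_span.induct)
  case (gen s)
  then obtain i where i: "i \<in> {1..n}" and "s = ge i \<or> s = gf i \<or> s = gh i"
    by (auto simp: gim_gens_def)
  moreover have "hat_e n i \<in> g_fp n \<kappa>" "hat_f n i \<in> g_fp n \<kappa>"
    using i by (auto simp: g_fp_def intro: aff_lie_span.gen)
  ultimately show ?case
    by (auto simp: gim_to_aff_GE gim_to_aff_GF gim_to_aff_GH g_fp_def intro: aff_lie_span.br)
next
  case (add x y)
  then show ?case
    by (simp add: gim_to_aff_add fa_lie_span_finite_supp g_fp_def aff_lie_span.add)
next
  case (smul x a)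
  then show ?case
    by (simp add: gim_to_aff_smul fa_lie_span_finite_supp g_fp_def aff_lie_span.smul)
next
  case (comm x y)
  then show ?case
    by (simp add: gim_to_aff_comm fa_lie_span_finite_supp g_fp_def aff_lie_span.br)
qed

section \<open>The defining relations hold in the affine algebra\<close>

text \<open>\<open>loop_unit m p q\<close> is \<open>E\<^sub>p\<^sub>q t\<^sup>m\<close>; the images of the generators are sums of two of these.\<close>
definition loop_unit :: "int \<Rightarrow> nat \<Rightarrow> nat \<Rightarrow> loop" where
  "loop_unit m p q = (\<lambda>k a b. if k = m \<and> a = p \<and> b = q then 1 else 0)"

lemma finite_asupp_loop_unit: "finite (asupp (loop_unit m p q))"
  by (rule finite_subset[of _ "{m}"]) (auto simp: asupp_def loop_unit_def fun_eq_iff)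

lemma finite_asupp_loop_zero: "finite (asupp loop_zero)"
  by (simp add: loop_zero_def asupp_def)

lemma finite_asupp_loop_add:
  "finite (asupp X) \<Longrightarrow> finite (asupp Y) \<Longrightarrow> finite (asupp (loop_add X Y))"
  by (rule finite_subset[of _ "asupp X \<union> asupp Y"]) (auto simp: asupp_def loop_add_def)

lemma finite_asupp_loop_smul: "finite (asupp X) \<Longrightarrow> finite (asupp (loop_smul c X))"
  by (rule finite_subset[of _ "asupp X"]) (auto simp: asupp_def loop_smul_def)

lemma loop_mul_unit_unit:
  assumes "q < N"
  shows "loop_mul N (loop_unit m p q) (loop_unit m' p' q')
    = (if q = p' then loop_unit (m + m') p q' else loop_zero)"
proof (intro ext)
  fix k a b
  have "loop_mul N (loop_unit m p q) (loop_unit m' p' q') k a b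
      = (\<Sum>c<N. loop_unit m p q m a c * loop_unit m' p' q' (k - m) c b)"
    by (subst loop_mul_eq_sum[of "{m}"]) (auto simp: asupp_def loop_unit_def fun_eq_iff)
  also have "\<dots> = (\<Sum>c<N. if c = q then (if a = p \<and> q = p' \<and> k - m = m' \<and> b = q' then 1 else 0) else 0)"
    by (rule sum.cong) (auto simp: loop_unit_def)
  also have "\<dots> = (if q = p' then loop_unit (m + m') p q' else loop_zero) k a b"
    using assms by (auto simp: sum.delta' loop_unit_def loop_zero_def)
  finally show "loop_mul N (loop_unit m p q) (loop_unit m' p' q') k a b
      = (if q = p' then loop_unit (m + m') p q' else loop_zero) k a b" .
qed

lemma loop_cocycle_unit_unit:
  assumes "p < N" "q < N"
  shows "loop_cocycle N \<kappa> (loop_unit m p q) (loop_unit m' p' q')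
    = (if q = p' then if q' = p then if m' = - m then of_int m * \<kappa> else 0 else 0 else 0)"
proof -
  let ?V = "if m' = - m \<and> q = p' \<and> q' = p then (1::complex) else 0"
  have unit: "loop_unit m p q m a c * loop_unit m' p' q' (- m) c a
      = (if c = q then (if a = p then ?V else 0) else 0)" for a c
    by (auto simp: loop_unit_def)
  have "loop_cocycle N \<kappa> (loop_unit m p q) (loop_unit m' p' q')
      = of_int m * \<kappa> * (\<Sum>a<N. \<Sum>c<N. loop_unit m p q m a c * loop_unit m' p' q' (- m) c a)"
    by (subst loop_cocycle_eq_sum[of "{m}"]) (auto simp: asupp_def loop_unit_def fun_eq_iff mtr_def mmul_def)
  also have "\<dots> = of_int m * \<kappa> * ?V"
    using assms by (simp only: unit) (simp add: sum.delta)
  finally show ?thesis by auto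
qed

lemma loop_mul_lincomb_left:
  assumes "finite (asupp X)" "finite (asupp Y)"
  shows "loop_mul N (\<lambda>k a b. \<alpha> * X k a b + \<beta> * Y k a b) Z
    = (\<lambda>k a b. \<alpha> * loop_mul N X Z k a b + \<beta> * loop_mul N Y Z k a b)"
proof (intro ext)
  fix k a b
  let ?S = "asupp X \<union> asupp Y"
  have S: "finite ?S" using assms by simp
  have "asupp (\<lambda>k a b. \<alpha> * X k a b + \<beta> * Y k a b) \<subseteq> ?S"
    by (force simp: asupp_def fun_eq_iff)
  then show "loop_mul N (\<lambda>k a b. \<alpha> * X k a b + \<beta> * Y k a b) Z k a b
      = \<alpha> * loop_mul N X Z k a b + \<beta> * loop_mul N Y Z k a b"
    by (simp add: loop_mul_eq_sum[OF S] distrib_right sum.distrib sum_distrib_left mult.assoc)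
qed

lemma loop_mul_lincomb_right:
  "loop_mul N X (\<lambda>k a b. \<alpha> * Y k a b + \<beta> * Y' k a b)
    = (\<lambda>k a b. \<alpha> * loop_mul N X Y k a b + \<beta> * loop_mul N X Y' k a b)"
  unfolding loop_mul_def mmul_def
  by (simp add: distrib_left sum.distrib sum_distrib_left algebra_simps)

lemma loop_cocycle_lincomb_left:
  assumes "finite (asupp X)" "finite (asupp Y)"
  shows "loop_cocycle N \<kappa> (\<lambda>k a b. \<alpha> * X k a b + \<beta> * Y k a b) Z
    = \<alpha> * loop_cocycle N \<kappa> X Z + \<beta> * loop_cocycle N \<kappa> Y Z"
proof -
  let ?S = "asupp X \<union> asupp Y"
  have S: "finite ?S" using assms by simp
  have "asupp (\<lambda>k a b. \<alpha> * X k a b + \<beta> * Y k a b) \<subseteq> ?S"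
    by (force simp: asupp_def fun_eq_iff)
  then show ?thesis
    by (simp add: loop_cocycle_eq_sum[OF S] mtr_def mmul_def distrib_right sum.distrib
        sum_distrib_left algebra_simps)
qed

lemma loop_cocycle_lincomb_right:
  "loop_cocycle N \<kappa> X (\<lambda>k a b. \<alpha> * Y k a b + \<beta> * Y' k a b)
    = \<alpha> * loop_cocycle N \<kappa> X Y + \<beta> * loop_cocycle N \<kappa> X Y'"
  unfolding loop_cocycle_def mtr_def mmul_def
  by (simp add: distrib_left sum.distrib sum_distrib_left algebra_simps)

lemma loop_mul_linear_left:
  assumes "finite (asupp X)" "finite (asupp Y)"
  shows "loop_mul N (loop_add X Y) Z = loop_add (loop_mul N X Z) (loop_mul N Y Z)"
    and "loop_mul N (loop_diff X Y) Z = loop_diff (loop_mul N X Z) (loop_mul N Y Z)"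
  using loop_mul_lincomb_left[OF assms, of N 1 1 Z] loop_mul_lincomb_left[OF assms, of N 1 "-1" Z]
  by (simp_all add: loop_add_def loop_diff_def)

lemma loop_mul_smul_left:
  "finite (asupp X) \<Longrightarrow> loop_mul N (loop_smul c X) Z = loop_smul c (loop_mul N X Z)"
  using loop_mul_lincomb_left[of X X N c 0 Z] by (simp add: loop_smul_def)

lemma loop_mul_linear_right:
  "loop_mul N Z (loop_add X Y) = loop_add (loop_mul N Z X) (loop_mul N Z Y)"
  "loop_mul N Z (loop_diff X Y) = loop_diff (loop_mul N Z X) (loop_mul N Z Y)"
  "loop_mul N Z (loop_smul c X) = loop_smul c (loop_mul N Z X)"
  using loop_mul_lincomb_right[of N Z 1 X 1 Y] loop_mul_lincomb_right[of N Z 1 X "-1" Y]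
    loop_mul_lincomb_right[of N Z c X 0 X]
  by (simp_all add: loop_add_def loop_diff_def loop_smul_def)

lemma loop_mul_zero: "loop_mul N loop_zero Z = loop_zero" "loop_mul N Z loop_zero = loop_zero"
  by (simp_all add: loop_zero_def loop_mul_def mmul_def asupp_def)

lemma loop_cocycle_linear_left:
  assumes "finite (asupp X)" "finite (asupp Y)"
  shows "loop_cocycle N \<kappa> (loop_add X Y) Z = loop_cocycle N \<kappa> X Z + loop_cocycle N \<kappa> Y Z"
    and "loop_cocycle N \<kappa> (loop_diff X Y) Z = loop_cocycle N \<kappa> X Z - loop_cocycle N \<kappa> Y Z"
  using loop_cocycle_lincomb_left[OF assms, of N \<kappa> 1 1 Z]
    loop_cocycle_lincomb_left[OF assms, of N \<kappa> 1 "-1" Z]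
  by (simp_all add: loop_add_def loop_diff_def)

lemma loop_cocycle_smul_left:
  "finite (asupp X) \<Longrightarrow> loop_cocycle N \<kappa> (loop_smul c X) Z = c * loop_cocycle N \<kappa> X Z"
  using loop_cocycle_lincomb_left[of X X N \<kappa> c 0 Z] by (simp add: loop_smul_def)

lemma loop_cocycle_linear_right:
  "loop_cocycle N \<kappa> Z (loop_add X Y) = loop_cocycle N \<kappa> Z X + loop_cocycle N \<kappa> Z Y"
  "loop_cocycle N \<kappa> Z (loop_diff X Y) = loop_cocycle N \<kappa> Z X - loop_cocycle N \<kappa> Z Y"
  "loop_cocycle N \<kappa> Z (loop_smul c X) = c * loop_cocycle N \<kappa> Z X"
  using loop_cocycle_lincomb_right[of N \<kappa> Z 1 X 1 Y] loop_cocycle_lincomb_right[of N \<kappa> Z 1 X "-1" Y]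
    loop_cocycle_lincomb_right[of N \<kappa> Z c X 0 X]
  by (simp_all add: loop_add_def loop_diff_def loop_smul_def)

lemma loop_cocycle_zero: "loop_cocycle N \<kappa> loop_zero Z = 0" "loop_cocycle N \<kappa> Z loop_zero = 0"
  by (simp_all add: loop_zero_def loop_cocycle_def mtr_def mmul_def asupp_def)

lemma hat_e_inner:
  "1 \<le> i \<Longrightarrow> i < n \<Longrightarrow> hat_e n i = (loop_diff (loop_unit 0 (i - 1) i) (loop_unit 0 (n + i) (n + i - 1)), 0)"
  by (auto simp: hat_e_def aff_single_def msub_def Epos_def Eneg_def munit_def loop_unit_def
      loop_diff_def fun_eq_iff)

lemma hat_e_last:
  "hat_e n n = (loop_add (loop_unit 0 (n - 1) n) (loop_unit (-1) 0 (2*n - 1)), 0)"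
  by (auto simp: hat_e_def aff_single_def aff_add_def madd_def Epos_def munit_def loop_unit_def
      loop_add_def fun_eq_iff)

lemma hat_f_inner:
  "1 \<le> i \<Longrightarrow> i < n \<Longrightarrow> hat_f n i = (loop_diff (loop_unit 0 i (i - 1)) (loop_unit 0 (n + i - 1) (n + i)), 0)"
  by (auto simp: hat_f_def aff_single_def msub_def Epos_def Eneg_def munit_def loop_unit_def
      loop_diff_def fun_eq_iff)

lemma hat_f_last:
  "hat_f n n = (loop_add (loop_unit 0 n (n - 1)) (loop_unit 1 (2*n - 1) 0), 0)"
  by (auto simp: hat_f_def aff_single_def aff_add_def madd_def Eneg_def munit_def loop_unit_def
      loop_add_def fun_eq_iff)

text \<open>The relative position of two nodes \<open>i, j\<close> of the diagram of \<open>M_n\<close>: the chain \<open>1, \<dots>, n - 1\<close>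
  (realized by \<open>E\<^sub>i\<^sub>-\<^sub>1\<^sub>,\<^sub>i - E\<^sub>n\<^sub>+\<^sub>i\<^sub>,\<^sub>n\<^sub>+\<^sub>i\<^sub>-\<^sub>1\<close>) and the node \<open>n\<close>, which is joined to \<open>n - 1\<close> and,
  with the positive entry, to \<open>1\<close>.\<close>
lemma gim_index_cases:
  fixes n i j :: nat
  assumes "3 \<le> n" "i \<in> {1..n}" "j \<in> {1..n}"
  obtains (inner_eq) "1 \<le> i" "i < n" "j = i"
    | (inner_succ) "1 \<le> i" "i + 1 < n" "j = i + 1"
    | (inner_pred) "1 \<le> j" "j + 1 < n" "i = j + 1"
    | (inner_far_succ) "1 \<le> i" "i + 1 < j" "j < n"
    | (inner_far_pred) "1 \<le> j" "j + 1 < i" "i < n"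
    | (pred_last) "1 \<le> i" "n = i + 1" "j = n"
    | (first_last) "i = 1" "j = n"
    | (far_last) "2 \<le> i" "i + 2 \<le> n" "j = n"
    | (last_pred) "1 \<le> j" "n = j + 1" "i = n"
    | (last_first) "j = 1" "i = n"
    | (last_far) "2 \<le> j" "j + 2 \<le> n" "i = n"
    | (last_last) "i = n" "j = n"
  using assms by atomize_elim (cases "i = n"; cases "j = n"; simp; arith)

lemmas relation_simps =
  hat_e_inner hat_e_last hat_f_inner hat_f_last Mn_def loop_mul_unit_unit loop_cocycle_unit_unit
  loop_mul_linear_left loop_mul_smul_left loop_mul_linear_right loop_mul_zero
  loop_cocycle_linear_left loop_cocycle_smul_left loop_cocycle_linear_right loop_cocycle_zero
  aff_br_eq aff_add_eq aff_smul_eq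
  finite_asupp_loop_unit finite_asupp_loop_zero finite_asupp_loop_add finite_asupp_loop_diff
  finite_asupp_loop_smul finite_asupp_loop_mul numeral_2_eq_2
  if_not_P[where P = "x = y" for x y :: nat] if_distribR
  if_distrib[where f = "loop_mul N" for N] if_distrib[where f = "loop_mul N Z" for N Z]
  if_distrib[where f = "loop_cocycle N \<kappa>" for N \<kappa>]
  if_distrib[where f = "loop_cocycle N \<kappa> Z" for N \<kappa> Z]
  if_distrib[where f = asupp] if_distrib[where f = finite]

lemmas loop_evals = loop_unit_def loop_add_def loop_diff_def loop_smul_def loop_zero_def fun_eq_iff

lemma relation_h_e:
  assumes "n \<ge> 3" "i \<in> {1..n}" "j \<in> {1..n}"
  shows "aff_add (aff_br (2*n) \<kappa> (aff_br (2*n) \<kappa> (hat_e n i) (hat_f n i)) (hat_e n j))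
    (aff_smul (-1) (aff_smul (of_int (Mn n i j)) (hat_e n j))) = (loop_zero, 0)"
  using assms
  by (cases rule: gim_index_cases;
      simp add: relation_simps split del: if_split; simp add: loop_evals split del: if_split)

lemma relation_h_f:
  assumes "n \<ge> 3" "i \<in> {1..n}" "j \<in> {1..n}"
  shows "aff_add (aff_br (2*n) \<kappa> (aff_br (2*n) \<kappa> (hat_e n i) (hat_f n i)) (hat_f n j))
    (aff_smul (of_int (Mn n i j)) (hat_f n j)) = (loop_zero, 0)"
  using assms
  by (cases rule: gim_index_cases;
      simp add: relation_simps split del: if_split; simp add: loop_evals split del: if_split)

lemma relations_nonpositive:
  assumes "n \<ge> 3" "i \<in> {1..n}" "j \<in> {1..n}" "i \<noteq> j" "Mn n i j \<le> 0"
  shows "aff_br (2*n) \<kappa> (hat_e n i) (hat_f n j) = (loop_zero, 0)"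
    and "aff_br (2*n) \<kappa> (hat_f n i) (hat_e n j) = (loop_zero, 0)"
    and "((aff_br (2*n) \<kappa> (hat_e n i)) ^^ nat (1 - Mn n i j)) (hat_e n j) = (loop_zero, 0)"
    and "((aff_br (2*n) \<kappa> (hat_f n i)) ^^ nat (1 - Mn n i j)) (hat_f n j) = (loop_zero, 0)"
  using assms
  by (cases rule: gim_index_cases;
      simp add: relation_simps split del: if_split; simp add: loop_evals split del: if_split)+

lemma relations_positive:
  assumes "n \<ge> 3" "i \<in> {1..n}" "j \<in> {1..n}" "i \<noteq> j" "Mn n i j > 0"
  shows "aff_br (2*n) \<kappa> (hat_e n i) (hat_e n j) = (loop_zero, 0)"
    and "aff_br (2*n) \<kappa> (hat_f n i) (hat_f n j) = (loop_zero, 0)"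
    and "((aff_br (2*n) \<kappa> (hat_e n i)) ^^ nat (Mn n i j + 1)) (hat_f n j) = (loop_zero, 0)"
    and "((aff_br (2*n) \<kappa> (hat_f n i)) ^^ nat (Mn n i j + 1)) (hat_e n j) = (loop_zero, 0)"
  using assms
  by (cases rule: gim_index_cases;
      simp add: relation_simps split del: if_split; simp add: loop_evals split del: if_split)+

lemma gim_to_aff_rels:
  assumes "n \<ge> 3" "r \<in> gim_rels n"
  shows "gim_to_aff n \<kappa> r = (loop_zero, 0)"
proof -
  have cancel: "aff_add x (aff_smul (-1) x) = (loop_zero, 0)" for x
    by (simp add: aff_add_def aff_smul_def loop_zero_def madd_def fun_eq_iff)
  from assms(2) show ?thesis
    unfolding gim_rels_def
    by (elim UnE CollectE exE conjE insertE)
       (simp_all add: gim_to_aff_sub gim_to_aff_add gim_to_aff_comm gim_to_aff_smul gim_to_aff_ad_pow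
        finite_fa_supp_comm finite_fa_supp_smul fa_supp_gen gim_to_aff_GE gim_to_aff_GF gim_to_aff_GH cancel assms(1)
        relation_h_e relation_h_f relations_nonpositive relations_positive)
qed

lemma gim_I_finite_supp: "n \<ge> 1 \<Longrightarrow> x \<in> gim_I n \<Longrightarrow> finite (fa_supp x)"
  using gim_I_subset_FL gim_FL_def fa_lie_span_finite_supp by metis

lemma gim_to_aff_gim_I:
  assumes n: "n \<ge> 3" and "x \<in> gim_I n"
  shows "gim_to_aff n \<kappa> x = (loop_zero, 0)"
  using assms(2) unfolding gim_I_def
proof (induction rule: fa_lie_ideal.induct)
  case (gen r)
  then show ?case by (rule gim_to_aff_rels[OF n])
next
  case zero
  then show ?case by (simp add: gim_to_aff_zero loop_zero_def)
next
  case (add x y)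
  then have "finite (fa_supp x)" "finite (fa_supp y)"
    using add.hyps n gim_I_finite_supp[of n] by (simp_all add: gim_I_def)
  then show ?case using add by (simp add: gim_to_aff_add aff_add_eq loop_add_def loop_zero_def)
next
  case (smul x a)
  then have "finite (fa_supp x)"
    using smul.hyps n gim_I_finite_supp[of n] by (simp add: gim_I_def)
  then show ?case using smul by (simp add: gim_to_aff_smul aff_smul_eq loop_smul_def loop_zero_def)
next
  case (comm z x)
  then have "finite (fa_supp x)" "finite (fa_supp z)"
    using comm.hyps n gim_I_finite_supp[of n] by (simp_all add: gim_I_def gim_FL_def fa_lie_span_finite_supp)
  then show ?case
    using comm by (simp add: gim_to_aff_comm aff_br_zero_right)
qed

section \<open>The homomorphism of enveloping algebras\<close>

definition gim_to_U :: "nat \<Rightarrow> complex \<Rightarrow> gimgen fa \<Rightarrow> aff fa" where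
  "gim_to_U n \<kappa> = fa_map (\<lambda>g. gim_to_aff n \<kappa> (fa_gen g))"

lemma FA_gim_to_U: "p \<in> FA (gim_gens n) \<Longrightarrow> gim_to_U n \<kappa> p \<in> FA (g_fp n \<kappa>)"
  unfolding gim_to_U_def
  by (rule FA_fa_map, assumption) (blast intro: gim_to_aff_g_fp fa_gen_in_gim_FL)

lemma gim_to_U_gen: "gim_to_U n \<kappa> (fa_gen g) = fa_gen (gim_to_aff n \<kappa> (fa_gen g))"
  by (simp add: gim_to_U_def fa_map_gen)

lemma U_fp_K_ideal:
  "fa_zero \<in> U_fp_K n \<kappa>"
  "x \<in> U_fp_K n \<kappa> \<Longrightarrow> y \<in> U_fp_K n \<kappa> \<Longrightarrow> fa_add x y \<in> U_fp_K n \<kappa>"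
  "x \<in> U_fp_K n \<kappa> \<Longrightarrow> y \<in> U_fp_K n \<kappa> \<Longrightarrow> fa_sub x y \<in> U_fp_K n \<kappa>"
  "x \<in> U_fp_K n \<kappa> \<Longrightarrow> fa_smul a x \<in> U_fp_K n \<kappa>"
  "x \<in> U_fp_K n \<kappa> \<Longrightarrow> p \<in> FA (g_fp n \<kappa>) \<Longrightarrow> fa_mul p x \<in> U_fp_K n \<kappa>"
  "x \<in> U_fp_K n \<kappa> \<Longrightarrow> p \<in> FA (g_fp n \<kappa>) \<Longrightarrow> fa_mul x p \<in> U_fp_K n \<kappa>"
  "fa_sub x x \<in> U_fp_K n \<kappa>"
  unfolding U_fp_K_def by (simp_all add: fa_ideal.intros fa_ideal_sub fa_ideal_sub_self)

lemma U_fp_K_rels: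
  assumes "x \<in> g_fp n \<kappa>" "y \<in> g_fp n \<kappa>"
  shows "fa_sub (fa_gen (aff_add x y)) (fa_add (fa_gen x) (fa_gen y)) \<in> U_fp_K n \<kappa>"
    and "fa_sub (fa_gen (aff_smul a x)) (fa_smul a (fa_gen x)) \<in> U_fp_K n \<kappa>"
    and "fa_sub (fa_comm (fa_gen x) (fa_gen y)) (fa_gen (aff_br (2*n) \<kappa> x y)) \<in> U_fp_K n \<kappa>"
  using assms unfolding U_fp_K_def by (blast intro: fa_ideal.gen)+

lemma fa_gen_aff_zero_in_U_fp_K:
  assumes "n \<ge> 1"
  shows "fa_gen (loop_zero, 0) \<in> U_fp_K n \<kappa>"
proof -
  have "hat_e n 1 \<in> g_fp n \<kappa>"
    using assms by (auto simp: g_fp_def intro: aff_lie_span.gen)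
  then have zero: "(loop_zero, 0) \<in> g_fp n \<kappa>"
    using aff_lie_span.smul[of "hat_e n 1" "2*n" \<kappa> _ 0]
    by (simp add: g_fp_def aff_smul_def loop_zero_def)
  have "aff_add (loop_zero, 0) (loop_zero, 0) = (loop_zero, 0)"
    by (simp add: aff_add_eq loop_add_def loop_zero_def)
  then have "fa_sub (fa_gen (loop_zero, 0)) (fa_add (fa_gen (loop_zero, 0)) (fa_gen (loop_zero, 0)))
      \<in> U_fp_K n \<kappa>"
    using U_fp_K_rels(1)[OF zero zero] by simp
  from U_fp_K_ideal(4)[OF this, of "-1"] show ?thesis
    by (simp add: fa_smul_def fa_sub_def fa_add_def)
qed

lemma gim_to_U_gim_FL:
  assumes "x \<in> gim_FL n"
  shows "fa_sub (gim_to_U n \<kappa> x) (fa_gen (gim_to_aff n \<kappa> x)) \<in> U_fp_K n \<kappa>"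
  using assms unfolding gim_FL_def
proof (induction rule: fa_lie_span.induct)
  case (gen s)
  then show ?case by (auto simp: gim_to_U_gen U_fp_K_ideal)
next
  case (add x y)
  let ?\<psi> = "gim_to_aff n \<kappa>" and ?\<Phi> = "gim_to_U n \<kappa>"
  have f: "finite (fa_supp x)" "finite (fa_supp y)"
    using add by (auto intro: fa_lie_span_finite_supp)
  have "?\<psi> x \<in> g_fp n \<kappa>" "?\<psi> y \<in> g_fp n \<kappa>"
    using add gim_to_aff_g_fp by (auto simp: gim_FL_def)
  note rel = U_fp_K_rels(1)[OF this]
  have "fa_sub (?\<Phi> (fa_add x y)) (fa_gen (?\<psi> (fa_add x y)))
      = fa_sub (fa_add (fa_sub (?\<Phi> x) (fa_gen (?\<psi> x))) (fa_sub (?\<Phi> y) (fa_gen (?\<psi> y))))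
          (fa_sub (fa_gen (aff_add (?\<psi> x) (?\<psi> y))) (fa_add (fa_gen (?\<psi> x)) (fa_gen (?\<psi> y))))"
    by (simp only: gim_to_U_def fa_map_add[OF f] gim_to_aff_add[OF f])
       (simp add: fa_sub_def fa_add_def fun_eq_iff)
  then show ?case
    using add rel by (simp add: U_fp_K_ideal)
next
  case (smul x a)
  let ?\<psi> = "gim_to_aff n \<kappa>" and ?\<Phi> = "gim_to_U n \<kappa>"
  have f: "finite (fa_supp x)"
    using smul by (auto intro: fa_lie_span_finite_supp)
  have "?\<psi> x \<in> g_fp n \<kappa>"
    using smul gim_to_aff_g_fp by (auto simp: gim_FL_def)
  note rel = U_fp_K_rels(2)[OF this this]
  have "fa_sub (?\<Phi> (fa_smul a x)) (fa_gen (?\<psi> (fa_smul a x)))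
      = fa_sub (fa_smul a (fa_sub (?\<Phi> x) (fa_gen (?\<psi> x))))
          (fa_sub (fa_gen (aff_smul a (?\<psi> x))) (fa_smul a (fa_gen (?\<psi> x))))"
    by (simp only: gim_to_U_def fa_map_smul[OF f] gim_to_aff_smul[OF f])
       (simp add: fa_sub_def fa_smul_def fun_eq_iff algebra_simps)
  then show ?case
    using smul rel by (simp add: U_fp_K_ideal)
next
  case (comm x y)
  let ?\<psi> = "gim_to_aff n \<kappa>" and ?\<Phi> = "gim_to_U n \<kappa>"
  let ?gx = "fa_gen (?\<psi> x)" and ?gy = "fa_gen (?\<psi> y)"
  have FA: "x \<in> FA (gim_gens n)" "y \<in> FA (gim_gens n)"
    using comm by (auto intro: fa_lie_span_FA)
  then have f: "finite (fa_supp x)" "finite (fa_supp y)"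
    by (auto intro: FA_finite_supp)
  have g: "?\<psi> x \<in> g_fp n \<kappa>" "?\<psi> y \<in> g_fp n \<kappa>"
    using comm gim_to_aff_g_fp by (auto simp: gim_FL_def)
  note rel = U_fp_K_rels(3)[OF g]
  have in_FA: "?\<Phi> x \<in> FA (g_fp n \<kappa>)" "?\<Phi> y \<in> FA (g_fp n \<kappa>)"
    "?gx \<in> FA (g_fp n \<kappa>)" "?gy \<in> FA (g_fp n \<kappa>)"
    using FA g by (auto intro: FA_gim_to_U FA_gen)
  have hom: "?\<Phi> (fa_comm x y) = fa_comm (?\<Phi> x) (?\<Phi> y)"
    by (simp add: gim_to_U_def fa_map_comm f)
  show ?case
    unfolding gim_to_aff_comm[OF f] hom
    by (subst fa_comm_sub_expand[where x = ?gx and y = ?gy])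
       (intro U_fp_K_ideal(2,4,5,6) comm.IH rel in_FA)
qed

lemma gim_to_U_gim_J:
  assumes n: "n \<ge> 3" and "x \<in> gim_J n"
  shows "gim_to_U n \<kappa> x \<in> U_fp_K n \<kappa>"
proof -
  have fin: "finite (fa_supp z)" if "z \<in> gim_J n" for z
    using FA_finite_supp[OF gim_J_subset_FA[OF that]] .
  from assms(2) show ?thesis
    unfolding gim_J_def
  proof (induction rule: fa_ideal.induct)
    case (gen r)
    have "fa_sub (gim_to_U n \<kappa> r) (fa_gen (loop_zero, 0)) \<in> U_fp_K n \<kappa>"
      using gim_to_U_gim_FL[OF gim_rels_subset_FL[OF gen]] gim_to_aff_rels[OF n gen] by simp
    from U_fp_K_ideal(2)[OF this fa_gen_aff_zero_in_U_fp_K] show ?case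
      using n by (simp add: fa_add_def fa_sub_def)
  next
    case zero
    then show ?case by (simp add: gim_to_U_def fa_map_zero U_fp_K_ideal)
  next
    case (add x y)
    then show ?case by (simp add: gim_to_U_def fa_map_add fin[unfolded gim_J_def] U_fp_K_ideal)
  next
    case (smul x a)
    then show ?case by (simp add: gim_to_U_def fa_map_smul fin[unfolded gim_J_def] U_fp_K_ideal)
  next
    case (lmul x p)
    then show ?case
      using FA_gim_to_U[of p n \<kappa>] FA_finite_supp[of p]
      by (simp add: gim_to_U_def fa_map_mul fin[unfolded gim_J_def] U_fp_K_ideal)
  next
    case (rmul x p)
    then show ?case
      using FA_gim_to_U[of p n \<kappa>] FA_finite_supp[of p]
      by (simp add: gim_to_U_def fa_map_mul fin[unfolded gim_J_def] U_fp_K_ideal)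
  qed
qed

theorem proposition4p1:
  fixes n :: nat and \<kappa> :: complex
  assumes "n \<ge> 3" and "\<kappa> \<noteq> 0"
  shows "\<exists>\<Phi> \<psi>.
     assoc_hom_quot (FA (gim_gens n)) (gim_J n) (FA (g_fp n \<kappa>)) (U_fp_K n \<kappa>) \<Phi> \<and>
     (\<forall>i\<in>{1..n}. fa_sub (\<Phi> (fa_gen (GE i))) (fa_gen (hat_e n i)) \<in> U_fp_K n \<kappa>
                 \<and> fa_sub (\<Phi> (fa_gen (GF i))) (fa_gen (hat_f n i)) \<in> U_fp_K n \<kappa>) \<and>
     lie_hom_quot (gim_FL n) (gim_I n) (2*n) \<kappa> \<psi> \<and>
     (\<forall>x\<in>gim_FL n. \<psi> x \<in> g_fp n \<kappa>) \<and>
     (\<forall>i\<in>{1..n}. \<psi> (fa_gen (GE i)) = hat_e n i \<and> \<psi> (fa_gen (GF i)) = hat_f n i) \<and>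
     (\<forall>x\<in>gim_FL n. fa_sub (\<Phi> x) (fa_gen (\<psi> x)) \<in> U_fp_K n \<kappa>)"
proof (intro exI conjI)
  \<comment> \<open>The construction works for every \<open>\<kappa>\<close>.\<close>
  show "assoc_hom_quot (FA (gim_gens n)) (gim_J n) (FA (g_fp n \<kappa>)) (U_fp_K n \<kappa>) (gim_to_U n \<kappa>)"
    unfolding assoc_hom_quot_def gim_to_U_def[symmetric]
    using FA_gim_to_U gim_to_U_gim_J[OF assms(1)]
    by (auto simp: gim_to_U_def fa_map_add fa_map_smul fa_map_mul fa_map_one FA_finite_supp
        U_fp_K_ideal)
  show "\<forall>i\<in>{1..n}. fa_sub (gim_to_U n \<kappa> (ge i)) (fa_gen (hat_e n i)) \<in> U_fp_K n \<kappa>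
      \<and> fa_sub (gim_to_U n \<kappa> (gf i)) (fa_gen (hat_f n i)) \<in> U_fp_K n \<kappa>"
    by (simp add: gim_to_U_gen gim_to_aff_GE gim_to_aff_GF U_fp_K_ideal)
  show "lie_hom_quot (gim_FL n) (gim_I n) (2*n) \<kappa> (gim_to_aff n \<kappa>)"
    unfolding lie_hom_quot_def
    using gim_to_aff_gim_I[OF assms(1)]
    by (auto simp: gim_to_aff_add gim_to_aff_smul gim_to_aff_comm gim_FL_def
        fa_lie_span_finite_supp loop_zero_def)
  show "\<forall>x\<in>gim_FL n. gim_to_aff n \<kappa> x \<in> g_fp n \<kappa>"
    by (simp add: gim_to_aff_g_fp)
  show "\<forall>i\<in>{1..n}. gim_to_aff n \<kappa> (ge i) = hat_e n i \<and> gim_to_aff n \<kappa> (gf i) = hat_f n i"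
    by (simp add: gim_to_aff_GE gim_to_aff_GF)
  show "\<forall>x\<in>gim_FL n. fa_sub (gim_to_U n \<kappa> x) (fa_gen (gim_to_aff n \<kappa> x)) \<in> U_fp_K n \<kappa>"
    by (simp add: gim_to_U_gim_FL)
qed

end
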